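(* Let $\mathcal A$ be a finite set, $\mathcal R\subset F(\mathcal A)$ finite, $\phi:F(\mathcal A)\to F(\mathcal A)$ a homomorphism, $G$ the group with presentation $\mathcal P=\langle t,\mathcal A:\mathcal R,\ t^{-1}at=\phi(a)\ (a\in\mathcal A)\rangle$, $X$ its Cayley 2-complex and $P:X\to\mathbb R$ the level map. Let $e:[0,1]\to X$ be an edge of $X$ with $e(0)=v$, $e(1)=w$ and label $a\in\mathcal A$, and let $r_v,r_w$ be the edge path rays at $v$ and $w$ each of whose edges is labeled $t$. Then there is a proper map $H_e:[0,1]\times[0,\infty)\to X$ with $H_e(x,0)=e(x)$, $H_e(0,y)=r_v(y)$, $H_e(1,y)=r_w(y)$, and $P(H_e([0,1]\times[n,n+1]))\subset[P(v)+n,P(v)+n+1]$ for every integer $n\ge 0$.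
   Context: The Cayley 2-complex $X$ of $\mathcal P$ is the simply connected 2-complex whose 1-skeleton is the Cayley graph of $G$ with respect to $\mathcal A\cup\{t\}$ (vertex set $G$), with a 2-cell at each vertex for each relator. For a vertex $g$, $P(g)$ (its level) is the exponent sum of $t$ in any word representing $g$; $P$ extends to $X$ by mapping each $\mathcal R$-cell to the level of its vertices, each conjugation 2-cell (boundary $a\,t\,\phi(a)^{-1}t^{-1}$ with the $a$-edge at level $L$) onto $[L,L+1]$ with the $a$-edge to $L$ and the $\phi(a)$-edges to $L+1$, and $t$-edges linearly. Edge path rays are parametrized so that the $i$-th edge is traversed on $[i-1,i]$. *)

theory Defs
  imports "HOL-Analysis.Analysis"
begin

datatype 'a gen = T | L 'a

(* A word is a list of letters with an exponent flag: (x, False) = x, (x, True) = x^-1. *)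
type_synonym 'a fword = "('a \<times> bool) list"
type_synonym 'a gword = "('a gen \<times> bool) list"

(* 2-cells at a vertex: one for each r in R, one conjugation cell for each a in A *)
datatype 'a cell = RelCell "'a fword" | ConjCell 'a

(* points of the disjoint union of all closed cells (before gluing):
   vertices, edges g --l--> g l (parameter in [0,1]), 2-cells (closed unit disk) *)
datatype ('g, 'a) pt = Vert 'g | Edge 'g "'a gen" real | Cell 'g "'a cell" complex

definition inv_word :: "('b \<times> bool) list \<Rightarrow> ('b \<times> bool) list" where
  "inv_word w = rev (map (\<lambda>(x, b). (x, \<not> b)) w)"

definition reduced :: "('b \<times> bool) list \<Rightarrow> bool" where
  "reduced w \<longleftrightarrow> (\<forall>i. Suc i < length w \<longrightarrow>
      \<not> (fst (w ! i) = fst (w ! Suc i) \<and> snd (w ! i) \<noteq> snd (w ! Suc i)))"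

definition over :: "'b set \<Rightarrow> ('b \<times> bool) list \<Rightarrow> bool" where
  "over S w \<longleftrightarrow> (\<forall>x\<in>set w. fst x \<in> S)"

definition liftw :: "'a fword \<Rightarrow> 'a gword" where
  "liftw w = map (\<lambda>(x, b). (L x, b)) w"

definition gens :: "'a set \<Rightarrow> 'a gen set" where
  "gens A = insert T (L ` A)"

definition conjrel :: "('a \<Rightarrow> 'a fword) \<Rightarrow> 'a \<Rightarrow> 'a gword" where
  "conjrel phi a = [(L a, False), (T, False)] @ inv_word (liftw (phi a)) @ [(T, True)]"

definition cellword :: "('a \<Rightarrow> 'a fword) \<Rightarrow> 'a cell \<Rightarrow> 'a gword" where
  "cellword phi c = (case c of RelCell r \<Rightarrow> liftw r | ConjCell a \<Rightarrow> conjrel phi a)"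

definition cells :: "'a set \<Rightarrow> 'a fword set \<Rightarrow> 'a cell set" where
  "cells A R = RelCell ` R \<union> ConjCell ` A"

definition relators :: "'a set \<Rightarrow> 'a fword set \<Rightarrow> ('a \<Rightarrow> 'a fword) \<Rightarrow> 'a gword set" where
  "relators A R phi = liftw ` R \<union> conjrel phi ` A"

(* equality in the group given by the presentation with relator set Q *)
inductive geq :: "'a gword set \<Rightarrow> 'a gword \<Rightarrow> 'a gword \<Rightarrow> bool" for Q where
  refl: "geq Q w w"
| sym: "geq Q u v \<Longrightarrow> geq Q v u"
| trans: "geq Q u v \<Longrightarrow> geq Q v w \<Longrightarrow> geq Q u w"
| cancel: "geq Q (p @ [(x, b), (x, \<not> b)] @ q) (p @ q)"
| rel: "r \<in> Q \<Longrightarrow> geq Q (p @ r @ q) (p @ q)"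

(* group elements = classes of words over A \<union> {t} *)
definition cls :: "'a set \<Rightarrow> 'a fword set \<Rightarrow> ('a \<Rightarrow> 'a fword) \<Rightarrow> 'a gword \<Rightarrow> 'a gword set" where
  "cls A R phi w = {u. over (gens A) u \<and> geq (relators A R phi) u w}"

definition verts :: "'a set \<Rightarrow> 'a fword set \<Rightarrow> ('a \<Rightarrow> 'a fword) \<Rightarrow> 'a gword set set" where
  "verts A R phi = {cls A R phi w | w. over (gens A) w}"

definition rep :: "'b set \<Rightarrow> 'b" where
  "rep g = (SOME w. w \<in> g)"

definition gapp :: "'a set \<Rightarrow> 'a fword set \<Rightarrow> ('a \<Rightarrow> 'a fword) \<Rightarrow> 'a gword set \<Rightarrow> 'a gword \<Rightarrow> 'a gword set" where
  "gapp A R phi g w = cls A R phi (rep g @ w)"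

definition gstep :: "'a set \<Rightarrow> 'a fword set \<Rightarrow> ('a \<Rightarrow> 'a fword) \<Rightarrow> 'a gword set \<Rightarrow> 'a gen \<Rightarrow> 'a gword set" where
  "gstep A R phi g l = gapp A R phi g [(l, False)]"

definition tsum :: "'a gword \<Rightarrow> int" where
  "tsum w = sum_list (map (\<lambda>(x, b). if x = T then (if b then -1 else 1) else 0) w)"

definition lev :: "'a gword set \<Rightarrow> real" where
  "lev g = real_of_int (tsum (rep g))"

type_synonym 'a xpt = "('a gword set, 'a) pt"

definition pre_carrier :: "'a set \<Rightarrow> 'a fword set \<Rightarrow> ('a \<Rightarrow> 'a fword) \<Rightarrow> 'a xpt set" where
  "pre_carrier A R phi =
     Vert ` verts A R phi
     \<union> {Edge g l s | g l s. g \<in> verts A R phi \<and> l \<in> gens A \<and> 0 \<le> s \<and> s \<le> 1}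
     \<union> {Cell g c z | g c z. g \<in> verts A R phi \<and> c \<in> cells A R \<and> cmod z \<le> 1}"

definition pre_top :: "'a set \<Rightarrow> 'a fword set \<Rightarrow> ('a \<Rightarrow> 'a fword) \<Rightarrow> 'a xpt topology" where
  "pre_top A R phi = topology (\<lambda>U. U \<subseteq> pre_carrier A R phi
      \<and> (\<forall>g l. openin (top_of_set {0..1}) {s \<in> {0..1}. Edge g l s \<in> U})
      \<and> (\<forall>g c. openin (top_of_set (cball 0 1)) {z \<in> cball 0 1. Cell g c z \<in> U}))"

definition qtop :: "'b topology \<Rightarrow> ('b \<Rightarrow> 'c) \<Rightarrow> 'c topology" where
  "qtop S f = topology (\<lambda>U. U \<subseteq> f ` topspace S \<and> openin S {x \<in> topspace S. f x \<in> U})"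

definition canon_edge :: "'a set \<Rightarrow> 'a fword set \<Rightarrow> ('a \<Rightarrow> 'a fword) \<Rightarrow> 'a gword set \<Rightarrow> 'a gen \<Rightarrow> real \<Rightarrow> 'a xpt" where
  "canon_edge A R phi g l s =
     (if s = 0 then Vert g else if s = 1 then Vert (gstep A R phi g l) else Edge g l s)"

(* attaching map of a 2-cell at g with boundary word w (unit circle divided into
   length w arcs, traversed counterclockwise starting at 1) *)
definition bdry :: "'a set \<Rightarrow> 'a fword set \<Rightarrow> ('a \<Rightarrow> 'a fword) \<Rightarrow> 'a gword set \<Rightarrow> 'a gword \<Rightarrow> complex \<Rightarrow> 'a xpt" where
  "bdry A R phi g w z =
     (if w = [] then Vert g else
      (let n = length w; \<theta> = Arg2pi z / (2 * pi); k = nat \<lfloor>real n * \<theta>\<rfloor>;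
           s = real n * \<theta> - real k; l = fst (w ! k); b = snd (w ! k)
       in if \<not> b then canon_edge A R phi (gapp A R phi g (take k w)) l s
          else canon_edge A R phi (gapp A R phi g (take (Suc k) w)) l (1 - s)))"

definition canon :: "'a set \<Rightarrow> 'a fword set \<Rightarrow> ('a \<Rightarrow> 'a fword) \<Rightarrow> 'a xpt \<Rightarrow> 'a xpt" where
  "canon A R phi p = (case p of
       Vert g \<Rightarrow> Vert g
     | Edge g l s \<Rightarrow> canon_edge A R phi g l s
     | Cell g c z \<Rightarrow> (if cmod z = 1 then bdry A R phi g (cellword phi c) z else Cell g c z))"

definition cayley2 :: "'a set \<Rightarrow> 'a fword set \<Rightarrow> ('a \<Rightarrow> 'a fword) \<Rightarrow> 'a xpt topology" where
  "cayley2 A R phi = qtop (pre_top A R phi) (canon A R phi)"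

definition edgemap :: "'a set \<Rightarrow> 'a fword set \<Rightarrow> ('a \<Rightarrow> 'a fword) \<Rightarrow> 'a gword set \<Rightarrow> 'a \<Rightarrow> real \<Rightarrow> 'a xpt" where
  "edgemap A R phi v a x = canon A R phi (Edge v (L a) x)"

(* edge path ray at v all of whose edges are labelled t; i-th edge on [i-1,i] *)
definition tray :: "'a set \<Rightarrow> 'a fword set \<Rightarrow> ('a \<Rightarrow> 'a fword) \<Rightarrow> 'a gword set \<Rightarrow> real \<Rightarrow> 'a xpt" where
  "tray A R phi v y =
     canon A R phi (Edge (gapp A R phi v (replicate (nat \<lfloor>y\<rfloor>) (T, False))) T (y - of_int \<lfloor>y\<rfloor>))"

definition is_level_map :: "'a set \<Rightarrow> 'a fword set \<Rightarrow> ('a \<Rightarrow> 'a fword) \<Rightarrow> ('a xpt \<Rightarrow> real) \<Rightarrow> bool" where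
  "is_level_map A R phi P \<longleftrightarrow>
     continuous_map (cayley2 A R phi) euclideanreal P \<and>
     (\<forall>g\<in>verts A R phi.
        P (Vert g) = lev g
      \<and> (\<forall>a\<in>A. \<forall>s. 0 < s \<and> s < 1 \<longrightarrow> P (Edge g (L a) s) = lev g)
      \<and> (\<forall>s. 0 < s \<and> s < 1 \<longrightarrow> P (Edge g T s) = lev g + s)
      \<and> (\<forall>r\<in>R. \<forall>z. cmod z < 1 \<longrightarrow> P (Cell g (RelCell r) z) = lev g)
      \<and> (\<forall>a\<in>A. \<forall>z. cmod z < 1 \<longrightarrow> P (Cell g (ConjCell a) z) \<in> {lev g .. lev g + 1}))"

definition proper_cmap :: "'b topology \<Rightarrow> 'c topology \<Rightarrow> ('b \<Rightarrow> 'c) \<Rightarrow> bool" where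
  "proper_cmap S Y f \<longleftrightarrow> continuous_map S Y f \<and>
     (\<forall>K. compactin Y K \<longrightarrow> compactin S {x \<in> topspace S. f x \<in> K})"

end

theory Submission
  imports Defs
begin

(*
  H is built strip by strip. On [0,1] x [0,1] it parametrizes the conjugation cell of the
  letter a at v as a square: the boundary word a t phi(a)^-1 t^-1 puts e at the bottom, the two
  t-edges on the sides and the edge path of phi(a) on top. The strip [0,1] x [n,n+1] is cut into
  columns, one per letter of the edge path reached at height n (a path labelled phi^n(a)), and
  each column is again the conjugation square of its letter. Each square lies between the levels
  of its bottom and its top, which gives the level estimate; it also shows that the preimage of a
  set on which P is bounded above is bounded. Properness then follows from Hausdorffness of X,
  which holds since points of X are separated by continuous real functions built cell by cell.
*)

lemma istopology_qtop: "istopology (\<lambda>U. U \<subseteq> f ` topspace S \<and> openin S {x \<in> topspace S. f x \<in> U})"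
proof -
  have int: "U \<inter> V \<subseteq> f ` topspace S \<and> openin S {x \<in> topspace S. f x \<in> U \<inter> V}"
    if a: "U \<subseteq> f ` topspace S \<and> openin S {x \<in> topspace S. f x \<in> U}"
    "V \<subseteq> f ` topspace S \<and> openin S {x \<in> topspace S. f x \<in> V}" for U V
  proof -
    have "{x \<in> topspace S. f x \<in> U \<inter> V} = {x \<in> topspace S. f x \<in> U} \<inter> {x \<in> topspace S. f x \<in> V}" by auto
    then show ?thesis using a by auto
  qed
  have un: "\<Union>K \<subseteq> f ` topspace S \<and> openin S {x \<in> topspace S. f x \<in> \<Union>K}"
    if a: "\<forall>U\<in>K. U \<subseteq> f ` topspace S \<and> openin S {x \<in> topspace S. f x \<in> U}" for K
  proof -
    have "{x \<in> topspace S. f x \<in> \<Union>K} = \<Union>((\<lambda>U. {x \<in> topspace S. f x \<in> U}) ` K)" by auto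
    then show ?thesis using a by (auto intro!: openin_Union)
  qed
  show ?thesis unfolding istopology_def using int un by blast
qed

lemma openin_qtop: "openin (qtop S f) U \<longleftrightarrow> U \<subseteq> f ` topspace S \<and> openin S {x \<in> topspace S. f x \<in> U}"
  unfolding qtop_def by (subst topology_inverse'[OF istopology_qtop]) simp

lemma topspace_qtop: "topspace (qtop S f) = f ` topspace S"
proof -
  have "openin (qtop S f) (f ` topspace S)" unfolding openin_qtop
    by (auto intro: openin_subopen[THEN iffD2] simp: openin_topspace)
  then show ?thesis using openin_subset[of "qtop S f"] openin_qtop
    by (metis openin_topspace subset_antisym openin_subset)
qed

lemma continuous_map_qtop: "continuous_map S (qtop S f) f"
  unfolding continuous_map_def topspace_qtop openin_qtop by auto

lemma continuous_map_from_qtop: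
  assumes "continuous_map S Y (\<lambda>x. g (f x))"
  shows "continuous_map (qtop S f) Y g"
  unfolding continuous_map_def topspace_qtop
proof (intro conjI allI impI)
  show "g \<in> f ` topspace S \<rightarrow> topspace Y" using assms by (auto simp: continuous_map_def)
next
  fix V assume V: "openin Y V"
  have "{x \<in> topspace S. f x \<in> {y \<in> f ` topspace S. g y \<in> V}} = {x \<in> topspace S. g (f x) \<in> V}" by auto
  then show "openin (qtop S f) {y \<in> f ` topspace S. g y \<in> V}"
    unfolding openin_qtop using assms V by (auto simp: continuous_map_def)
qed

lemma cis_add_2pi: "cis (a + 2 * pi) = cis a"
  by (simp add: complex_eq_iff)

lemma continuous_on_if_const: "continuous_on S f \<Longrightarrow> continuous_on S g \<Longrightarrow> continuous_on S (\<lambda>x. if P then f x else g x)"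
  by (cases P) auto

lemma continuous_on_polar:
  fixes \<rho> \<theta> :: "'b::metric_space \<Rightarrow> real"
  assumes r: "continuous_on S \<rho>"
    and t: "\<And>p. p \<in> S \<Longrightarrow> \<rho> p \<noteq> 0 \<Longrightarrow> continuous (at p within S) \<theta>"
  shows "continuous_on S (\<lambda>p. complex_of_real (\<rho> p) * cis (\<theta> p))"
  unfolding continuous_on_eq_continuous_within
proof
  fix p assume p: "p \<in> S"
  have rp: "continuous (at p within S) \<rho>" using r p by (simp add: continuous_on_eq_continuous_within)
  show "continuous (at p within S) (\<lambda>p. complex_of_real (\<rho> p) * cis (\<theta> p))"
  proof (cases "\<rho> p = 0")
    case False
    show ?thesis using rp t[OF p False] unfolding cis_conv_exp by (intro continuous_intros) auto
  next
    case True
    have "((\<lambda>q. \<rho> q) \<longlongrightarrow> 0) (at p within S)" using rp True by (simp add: continuous_within)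
    then have "((\<lambda>q. norm (complex_of_real (\<rho> q) * cis (\<theta> q))) \<longlongrightarrow> 0) (at p within S)"
      by (simp add: norm_mult tendsto_rabs_zero)
    then have "((\<lambda>q. complex_of_real (\<rho> q) * cis (\<theta> q)) \<longlongrightarrow> 0) (at p within S)"
      by (rule tendsto_norm_zero_cancel)
    then show ?thesis using True by (simp add: continuous_within)
  qed
qed

lemma sphere_eq_cis_Arg2pi: "cmod z = 1 \<Longrightarrow> z = cis (Arg2pi z)"
proof -
  assume z: "cmod z = 1"
  have "is_Arg z (Arg2pi z)" using Arg2pi by blast
  then show ?thesis using z by (simp add: is_Arg_def cis_conv_exp)
qed

lemma sphere_cis_arc:
  assumes z: "cmod z = 1" and n: "n > 0"
  shows "\<exists>k s. k < n \<and> 0 \<le> s \<and> s < 1 \<and> z = cis (2 * pi * ((real k + s) / real n))"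
proof -
  define t where "t = Arg2pi z / (2 * pi)"
  have t: "0 \<le> t" "t < 1" using Arg2pi[of z] by (auto simp: t_def field_simps)
  define k where "k = nat \<lfloor>real n * t\<rfloor>"
  define s where "s = real n * t - real k"
  have nt: "0 \<le> real n * t" "real n * t < real n" using t n by auto
  have kk: "real k = of_int \<lfloor>real n * t\<rfloor>" using nt by (simp add: k_def)
  have s: "0 \<le> s" "s < 1" unfolding s_def kk by linarith+
  have "real k < real n" using nt kk by linarith
  then have kn: "k < n" by simp
  have "(real k + s) / real n = t" using n by (simp add: s_def)
  then have "z = cis (2 * pi * ((real k + s) / real n))" using sphere_eq_cis_Arg2pi[OF z] by (simp add: t_def)
  then show ?thesis using kn s by blast
qed

lemma cis_local_Arg:
  assumes z0: "z0 = cis (2 * pi * t0)" and z: "cmod z = 1"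
  shows "cis (2 * pi * (t0 + Arg (z / z0) / (2 * pi))) = z"
proof -
  have n0: "cmod z0 = 1" using z0 by simp
  then have "z0 \<noteq> 0" by auto
  have q: "cmod (z / z0) = 1" using z n0 by (simp add: norm_divide)
  then have "z / z0 \<noteq> 0" by auto
  then have "cis (Arg (z / z0)) = sgn (z / z0)" by (rule cis_Arg)
  also have "\<dots> = z / z0" using q by (simp add: sgn_eq)
  finally have c: "cis (Arg (z / z0)) = z / z0" .
  have "2 * pi * (t0 + Arg (z / z0) / (2 * pi)) = 2 * pi * t0 + Arg (z / z0)" by (simp add: field_simps)
  then have "cis (2 * pi * (t0 + Arg (z / z0) / (2 * pi))) = z0 * cis (Arg (z / z0))"
    by (simp add: z0 cis_mult)
  also have "\<dots> = z" using c \<open>z0 \<noteq> 0\<close> by simp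
  finally show ?thesis .
qed

lemma isCont_local_angle:
  assumes "z0 \<noteq> 0"
  shows "isCont (\<lambda>z. t0 + Arg (z / z0) / (2 * pi)) z0"
proof -
  have "isCont (\<lambda>z. z / z0) z0" using assms by (intro continuous_intros)
  moreover have "isCont Arg (z0 / z0)"
    using assms by (simp add: continuous_at_Arg complex_nonpos_Reals_iff)
  ultimately have "isCont (\<lambda>z. Arg (z / z0)) z0" by (rule continuous_at_compose[unfolded o_def])
  then show ?thesis by (intro continuous_intros) simp_all
qed

lemma continuous_on_sphere_from_angle:
  fixes \<beta> :: "complex \<Rightarrow> real"
  assumes psi: "continuous_on {-1..2} (\<lambda>t. \<beta> (cis (2 * pi * t)))"
  shows "continuous_on (sphere 0 1) \<beta>"
  unfolding continuous_on_eq_continuous_within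
proof
  fix z0 :: complex assume z0s: "z0 \<in> sphere 0 1"
  then have z0n: "cmod z0 = 1" by simp
  define t0 where "t0 = Arg2pi z0 / (2 * pi)"
  have t0: "0 \<le> t0" "t0 < 1" using Arg2pi[of z0] by (auto simp: t0_def field_simps)
  have z0c: "z0 = cis (2 * pi * t0)" using sphere_eq_cis_Arg2pi[OF z0n] by (simp add: t0_def)
  define \<tau> where "\<tau> z = t0 + Arg (z / z0) / (2 * pi)" for z
  have tr: "\<tau> z \<in> {-1..2}" for z
  proof -
    have a: "-pi < Arg (z / z0)" "Arg (z / z0) \<le> pi" using Arg_bounded[of "z / z0"] by auto
    have h1: "-1/2 \<le> Arg (z / z0) / (2 * pi)" using a pi_gt_zero by (simp add: field_simps)
    have h2: "Arg (z / z0) / (2 * pi) \<le> 1/2" using a pi_gt_zero by (simp add: field_simps)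
    show ?thesis unfolding \<tau>_def atLeastAtMost_iff using h1 h2 t0 by (intro conjI; linarith)
  qed
  have "isCont \<tau> z0" unfolding \<tau>_def using z0n by (intro isCont_local_angle) auto
  then have ct: "continuous (at z0 within sphere 0 1) \<tau>"
    by (rule continuous_at_imp_continuous_at_within)
  have cp: "continuous (at (\<tau> z0) within \<tau> ` sphere 0 1) (\<lambda>t. \<beta> (cis (2 * pi * t)))"
  proof -
    have "continuous (at (\<tau> z0) within {-1..2}) (\<lambda>t. \<beta> (cis (2 * pi * t)))"
      using psi tr by (simp add: continuous_on_eq_continuous_within)
    then show ?thesis by (rule continuous_within_subset) (use tr in auto)
  qed
  have c2: "continuous (at z0 within sphere 0 1) (\<lambda>z. \<beta> (cis (2 * pi * \<tau> z)))"
    using continuous_within_compose2[OF ct cp] .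
  show "continuous (at z0 within sphere 0 1) \<beta>"
  proof (rule continuous_transform_within[OF c2 zero_less_one z0s])
    fix z :: complex assume "z \<in> sphere 0 1"
    then show "\<beta> (cis (2 * pi * \<tau> z)) = \<beta> z" using cis_local_Arg[OF z0c] by (simp add: \<tau>_def)
  qed
qed

lemma continuous_on_periodic_extend:
  fixes \<psi> :: "real \<Rightarrow> real"
  assumes c: "continuous_on {0..1} \<psi>" and per: "\<And>t. \<psi> (t + 1) = \<psi> t"
  shows "continuous_on {-1..2} \<psi>"
proof -
  have a: "continuous_on {-1..0} \<psi>"
  proof -
    have "continuous_on {-1..0} (\<lambda>t. \<psi> (t + 1))"
      by (rule continuous_on_compose2[OF c]) (auto intro!: continuous_intros)
    then show ?thesis using per by simp
  qed
  have b: "continuous_on {1..2} \<psi>"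
  proof -
    have "continuous_on {1..2} (\<lambda>t. \<psi> (t - 1))"
      by (rule continuous_on_compose2[OF c]) (auto intro!: continuous_intros)
    moreover have "\<psi> (t - 1) = \<psi> t" for t using per[of "t - 1"] by simp
    ultimately show ?thesis by simp
  qed
  have "{-1..2::real} = {-1..0} \<union> {0..1} \<union> {1..2}" by auto
  then show ?thesis using a b c by (metis closed_atLeastAtMost closed_Un continuous_on_closed_Un)
qed

lemma continuous_on_radial_extend:
  fixes \<beta> :: "complex \<Rightarrow> real"
  assumes b: "continuous_on (sphere 0 1) \<beta>"
  shows "continuous_on (cball 0 1) (\<lambda>z. cmod z * \<beta> (z / of_real (cmod z)))"
proof -
  have "bounded (\<beta> ` sphere 0 1)" using b by (intro compact_imp_bounded compact_continuous_image) auto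
  then obtain M where M: "\<And>w. w \<in> sphere 0 1 \<Longrightarrow> \<bar>\<beta> w\<bar> \<le> M"
    unfolding bounded_iff by fastforce
  let ?f = "\<lambda>z. cmod z * \<beta> (z / of_real (cmod z))"
  have c1: "continuous_on (cball 0 1 - {0}) ?f"
  proof (intro continuous_intros)
    have "continuous_on (cball 0 1 - {0}) (\<lambda>z::complex. z / of_real (cmod z))"
      by (intro continuous_intros) auto
    moreover have "(\<lambda>z::complex. z / of_real (cmod z)) ` (cball 0 1 - {0}) \<subseteq> sphere 0 1"
      by (auto simp: norm_divide split: if_splits)
    ultimately show "continuous_on (cball 0 1 - {0}) (\<lambda>z. \<beta> (z / of_real (cmod z)))"
      using continuous_on_compose2[OF b] by blast
  qed
  show ?thesis unfolding continuous_on_eq_continuous_within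
  proof
    fix x :: complex assume x: "x \<in> cball 0 1"
    show "continuous (at x within cball 0 1) ?f"
    proof (cases "x = 0")
      case False
      have "at x within cball 0 1 = at x within (cball 0 1 - {0})"
        by (rule at_within_nhd[where S = "- {0}"]) (use False in auto)
      moreover have "continuous (at x within (cball 0 1 - {0})) ?f"
        using c1 x False by (simp add: continuous_on_eq_continuous_within)
      ultimately show ?thesis by (simp add: continuous_within)
    next
      case True
      have "((\<lambda>z. cmod z) \<longlongrightarrow> 0) (at x within cball 0 1)"
        using True by (auto intro!: tendsto_eq_intros)
      moreover have "\<forall>\<^sub>F z in at x within cball 0 1. norm (?f z) \<le> norm (cmod z) * M"
      proof (rule always_eventually, rule allI)
        fix z :: complex
        show "norm (?f z) \<le> norm (cmod z) * M"
        proof (cases "z = 0")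
          case True then show ?thesis by simp
        next
          case False
          then have "z / of_real (cmod z) \<in> sphere 0 1" by (simp add: norm_divide)
          then show ?thesis using M by (simp add: abs_mult mult_left_mono)
        qed
      qed
      ultimately have "(?f \<longlongrightarrow> 0) (at x within cball 0 1)" by (rule tendsto_0_le)
      then show ?thesis using True by (simp add: continuous_within)
    qed
  qed
qed

lemma atLeastAtMost_01_eq_UN_segments:
  assumes n: "n > 0"
  shows "{0..1::real} = (\<Union>k<n. {real k / real n .. (real k + 1) / real n})"
proof
  show "{0..1} \<subseteq> (\<Union>k<n. {real k / real n .. (real k + 1) / real n})"
  proof
    fix t :: real assume t: "t \<in> {0..1}"
    define k where "k = min (nat \<lfloor>t * real n\<rfloor>) (n - 1)"
    have "k < n" "real k \<le> t * real n" "t * real n \<le> real k + 1"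
      using t n by (auto simp: k_def min_def mult_le_cancel_right1 of_nat_diff) linarith+
    then show "t \<in> (\<Union>k<n. {real k / real n .. (real k + 1) / real n})"
      using n by (intro UN_I[of k]) (auto simp: field_simps)
  qed
  show "(\<Union>k<n. {real k / real n .. (real k + 1) / real n}) \<subseteq> {0..1}"
  proof (rule UN_least)
    fix k assume "k \<in> {..<n}"
    then have "0 \<le> real k / real n" "(real k + 1) / real n \<le> 1" using n by (auto simp: field_simps)
    then show "{real k / real n .. (real k + 1) / real n} \<subseteq> {0..1}" by auto
  qed
qed

lemma pasting_closed_cover:
  assumes fin: "finite I" and cl: "\<And>i. i \<in> I \<Longrightarrow> closed (TT i)"
    and ct: "\<And>i. i \<in> I \<Longrightarrow> continuous_map (top_of_set (D \<inter> TT i)) Y (f i)"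
    and pw: "\<And>i p. i \<in> I \<Longrightarrow> p \<in> D \<inter> TT i \<Longrightarrow> F p = f i p"
    and cov: "\<And>p. p \<in> D \<Longrightarrow> \<exists>i\<in>I. p \<in> TT i"
  shows "continuous_map (top_of_set D) Y F"
proof (rule pasting_lemma_closed[where I = I and T = "\<lambda>i. D \<inter> TT i" and f = f])
  show "finite I" by (rule fin)
  fix i assume i: "i \<in> I"
  show "closedin (top_of_set D) (D \<inter> TT i)" using cl[OF i] by (rule closedin_closed_Int)
  show "continuous_map (subtopology (top_of_set D) (D \<inter> TT i)) Y (f i)"
    using ct[OF i] by (simp add: subtopology_subtopology)
next
  fix i j p assume "i \<in> I" "j \<in> I" "p \<in> topspace (top_of_set D) \<inter> (D \<inter> TT i) \<inter> (D \<inter> TT j)"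
  then show "f i p = f j p" using pw by (metis IntD1 IntD2 IntI topspace_euclidean_subtopology)
next
  fix p assume "p \<in> topspace (top_of_set D)"
  then have pD: "p \<in> D" by simp
  then obtain i where "i \<in> I" "p \<in> TT i" using cov by blast
  then show "\<exists>j. j \<in> I \<and> p \<in> D \<inter> TT j \<and> F p = f j p" using pw pD by blast
qed

lemma Hausdorff_space_if_real_separated:
  assumes "\<And>x y. x \<in> topspace X \<Longrightarrow> y \<in> topspace X \<Longrightarrow> x \<noteq> y \<Longrightarrow>
      \<exists>f. continuous_map X euclideanreal f \<and> f x \<noteq> f y"
  shows "Hausdorff_space X"
  unfolding Hausdorff_space_def
proof (intro allI impI)
  fix x y assume xy: "x \<in> topspace X \<and> y \<in> topspace X \<and> x \<noteq> y"
  then obtain f where f: "continuous_map X euclideanreal f" "f x \<noteq> f y" using assms by blast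
  obtain U V where UV: "open U" "open V" "f x \<in> U" "f y \<in> V" "U \<inter> V = {}"
    using separation_t2[THEN iffD1, OF f(2)] by blast
  have "openin X {z \<in> topspace X. f z \<in> U}" "openin X {z \<in> topspace X. f z \<in> V}"
    using UV f(1) by (auto intro: openin_continuous_map_preimage)
  moreover have "disjnt {z \<in> topspace X. f z \<in> U} {z \<in> topspace X. f z \<in> V}"
    using UV(5) by (auto simp: disjnt_def)
  ultimately show "\<exists>U V. openin X U \<and> openin X V \<and> x \<in> U \<and> y \<in> V \<and> disjnt U V"
    using xy UV by blast
qed

lemma proper_cmap_if_sublevels_bounded:
  fixes S :: "'b::heine_borel set"
  assumes H: "continuous_map (top_of_set S) Y H" and Y: "Hausdorff_space Y"
    and f: "continuous_map Y euclideanreal f" and S: "closed S"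
    and bnd: "\<And>B. bounded {p \<in> S. f (H p) \<le> B}"
  shows "proper_cmap (top_of_set S) Y H"
  unfolding proper_cmap_def
proof (intro conjI allI impI H)
  fix K assume K: "compactin Y K"
  let ?C = "{p \<in> topspace (top_of_set S). H p \<in> K}"
  have "compact (f ` K)" using image_compactin[OF K f] by simp
  then obtain B where "\<And>r. r \<in> f ` K \<Longrightarrow> norm r \<le> B"
    by (meson bounded_iff compact_imp_bounded)
  then have B: "\<And>q. q \<in> K \<Longrightarrow> f q \<le> B" by fastforce
  have "closedin (top_of_set S) ?C"
    using closedin_continuous_map_preimage[OF H compactin_imp_closedin[OF Y K]] .
  then have "closed ?C" using S by (rule closedin_closed_trans)
  moreover have "bounded ?C" using bnd[of B] by (rule bounded_subset) (auto dest: B)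
  ultimately show "compactin (top_of_set S) ?C" by (simp add: compactin_subtopology compact_eq_bounded_closed)
qed

section \<open>A map from the square onto the disk\<close>

(* square_disk m maps the unit square onto the closed unit disk, each concentric square around
   (1/2, 1/2) onto a circle, with the four triangles cut out by the diagonals handled by
   sqd_b, sqd_r, sqd_t, sqd_l. On the boundary, the bottom, right and left sides go to the arcs of
   the first, second and last letter of a boundary word with m letters, and the top side runs
   backwards over the remaining m - 3 arcs. *)
definition "sqd_b m p = complex_of_real (1 - 2 * snd p) * cis (2 * pi * ((1/2 + (fst p - 1/2) / (1 - 2 * snd p)) / m))"

definition "sqd_r m p = complex_of_real (2 * fst p - 1) * cis (2 * pi * ((1 + (1/2 + (snd p - 1/2) / (2 * fst p - 1))) / m))"

definition "sqd_t m p = complex_of_real (2 * snd p - 1) * cis (2 * pi * ((m - 1 - (1/2 + (fst p - 1/2) / (2 * snd p - 1)) * (m - 3)) / m))"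

definition "sqd_l m p = complex_of_real (1 - 2 * fst p) * cis (2 * pi * (- (1/2 + (snd p - 1/2) / (1 - 2 * fst p)) / m))"

definition square_disk :: "real \<Rightarrow> real \<times> real \<Rightarrow> complex" where
  "square_disk m p = (if snd p \<le> fst p then (if fst p + snd p \<le> 1 then sqd_b m p else sqd_r m p)
              else (if 1 \<le> fst p + snd p then sqd_t m p else sqd_l m p))"

abbreviation "unit_sq \<equiv> {0..1::real} \<times> {0..1::real}"

lemma sqd_b_eq_r: "snd p \<le> fst p \<Longrightarrow> fst p + snd p = 1 \<Longrightarrow> sqd_b m p = sqd_r m p"
proof -
  assume a: "snd p \<le> fst p" "fst p + snd p = 1"
  show ?thesis
  proof (cases "fst p = 1/2")
    case True then have "snd p = 1/2" using a by simp
    then have e: "1 - 2 * snd p = 0" "2 * fst p - 1 = 0" using True by simp_all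
    then show ?thesis unfolding sqd_b_def sqd_r_def e by simp
  next
    case False
    then have ne: "2 * fst p - 1 \<noteq> 0" by simp
    have y: "snd p = 1 - fst p" using a by simp
    have e1: "1 - 2 * snd p = 2 * fst p - 1" using y by simp
    have e2: "(fst p - 1/2) / (2 * fst p - 1) = 1/2" using ne by (simp add: field_simps)
    have e3: "(snd p - 1/2) / (2 * fst p - 1) = - 1/2" using ne y by (simp add: field_simps)
    show ?thesis unfolding sqd_b_def sqd_r_def e1 e2 e3 by simp
  qed
qed

lemma sqd_r_eq_t: "snd p = fst p \<Longrightarrow> 1 < fst p + snd p \<Longrightarrow> sqd_r m p = sqd_t m p"
proof -
  assume a: "snd p = fst p" "1 < fst p + snd p"
  then have ne: "2 * fst p - 1 \<noteq> 0" by simp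
  have e2: "(fst p - 1/2) / (2 * fst p - 1) = 1/2" using ne by (simp add: field_simps)
  have "1 + (1/2 + 1/2) = m - 1 - (1/2 + 1/2) * (m - 3)" by simp
  then show ?thesis unfolding sqd_r_def sqd_t_def a(1) e2 by simp
qed

lemma sqd_b_eq_l: "snd p = fst p \<Longrightarrow> fst p + snd p \<le> 1 \<Longrightarrow> sqd_b m p = sqd_l m p"
proof -
  assume a: "snd p = fst p" "fst p + snd p \<le> 1"
  show ?thesis
  proof (cases "fst p = 1/2")
    case True then have e: "1 - 2 * snd p = 0" "1 - 2 * fst p = 0" using a by simp_all
    then show ?thesis unfolding sqd_b_def sqd_l_def e by simp
  next
    case False
    then have ne: "1 - 2 * fst p \<noteq> 0" by simp
    have e2: "(fst p - 1/2) / (1 - 2 * fst p) = - 1/2" using ne by (simp add: field_simps)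
    show ?thesis unfolding sqd_b_def sqd_l_def a(1) e2 by simp
  qed
qed

lemma sqd_t_eq_l: "fst p < snd p \<Longrightarrow> fst p + snd p = 1 \<Longrightarrow> m \<noteq> 0 \<Longrightarrow> sqd_t m p = sqd_l m p"
proof -
  assume a: "fst p < snd p" "fst p + snd p = 1" and m: "m \<noteq> 0"
  then have ne: "1 - 2 * fst p \<noteq> 0" by simp
  have y: "snd p = 1 - fst p" using a by simp
  have e1: "2 * snd p - 1 = 1 - 2 * fst p" using y by simp
  have e2: "(fst p - 1/2) / (1 - 2 * fst p) = - 1/2" using ne by (simp add: field_simps)
  have e3: "(snd p - 1/2) / (1 - 2 * fst p) = 1/2" using ne y by (simp add: field_simps)
  have "2 * pi * ((m - 1 - (1/2 + - 1/2) * (m - 3)) / m) = 2 * pi * (- (1/2 + 1/2) / m) + 2 * pi"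
    using m by (simp add: field_simps)
  then show ?thesis unfolding sqd_t_def sqd_l_def e1 e2 e3 by (simp only: cis_add_2pi)
qed

lemma square_disk_eq_sqd_t: "fst p \<le> snd p \<Longrightarrow> 1 \<le> fst p + snd p \<Longrightarrow> square_disk m p = sqd_t m p"
proof (cases "snd p \<le> fst p")
  case True
  moreover assume "fst p \<le> snd p" "1 \<le> fst p + snd p"
  ultimately have e: "snd p = fst p" by simp
  show ?thesis
  proof (cases "fst p + snd p \<le> 1")
    case True
    then have "2 * snd p - 1 = 0" "1 - 2 * snd p = 0" using e \<open>1 \<le> fst p + snd p\<close> by simp_all
    then show ?thesis using e True by (simp add: square_disk_def sqd_b_def sqd_t_def)
  next
    case False
    then show ?thesis using e sqd_r_eq_t[of p m] by (simp add: square_disk_def)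
  qed
qed (simp add: square_disk_def)

lemma square_disk_eq_sqd_l:
  "m \<noteq> 0 \<Longrightarrow> fst p \<le> snd p \<Longrightarrow> fst p + snd p \<le> 1 \<Longrightarrow> square_disk m p = sqd_l m p"
  by (cases "snd p \<le> fst p") (auto simp: square_disk_def sqd_b_eq_l sqd_t_eq_l)

lemma square_disk_bottom: "0 \<le> x \<Longrightarrow> x \<le> 1 \<Longrightarrow> square_disk m (x, 0) = cis (2 * pi * (x / m))"
  by (simp add: square_disk_def sqd_b_def)

lemma square_disk_right: "0 \<le> y \<Longrightarrow> y \<le> 1 \<Longrightarrow> square_disk m (1, y) = cis (2 * pi * ((1 + y) / m))"
proof -
  assume y: "0 \<le> y" "y \<le> 1"
  have "square_disk m (1, y) = sqd_r m (1, y)"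
    using sqd_b_eq_r[of "(1,y)" m] y by (auto simp: square_disk_def)
  then show ?thesis by (simp add: sqd_r_def)
qed

lemma square_disk_top: "0 \<le> x \<Longrightarrow> x \<le> 1 \<Longrightarrow> square_disk m (x, 1) = cis (2 * pi * ((m - 1 - x * (m - 3)) / m))"
  by (simp add: square_disk_eq_sqd_t sqd_t_def)

lemma square_disk_left: "0 \<le> y \<Longrightarrow> y \<le> 1 \<Longrightarrow> m \<noteq> 0 \<Longrightarrow> square_disk m (0, y) = cis (2 * pi * (- y / m))"
  by (simp add: square_disk_eq_sqd_l sqd_l_def)

lemma norm_of_real_mult_cis: "cmod (complex_of_real r * cis t) = \<bar>r\<bar>"
  by (simp add: norm_mult)

lemma norm_square_disk: "cmod (square_disk m p) = (if snd p \<le> fst p then (if fst p + snd p \<le> 1 then \<bar>1 - 2 * snd p\<bar> else \<bar>2 * fst p - 1\<bar>)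
              else (if 1 \<le> fst p + snd p then \<bar>2 * snd p - 1\<bar> else \<bar>1 - 2 * fst p\<bar>))"
  unfolding square_disk_def by (simp only: if_distrib[of cmod] sqd_b_def sqd_r_def sqd_t_def sqd_l_def norm_of_real_mult_cis)

lemma norm_square_disk_le: "p \<in> unit_sq \<Longrightarrow> cmod (square_disk m p) \<le> 1"
  unfolding norm_square_disk by (cases p) auto

lemma norm_square_disk_less: "0 < fst p \<Longrightarrow> fst p < 1 \<Longrightarrow> 0 < snd p \<Longrightarrow> snd p < 1 \<Longrightarrow> cmod (square_disk m p) < 1"
  unfolding norm_square_disk by (cases p) auto

lemma continuous_on_square_disk: "m \<noteq> 0 \<Longrightarrow> continuous_on unit_sq (square_disk m)"
proof -
  assume m: "m \<noteq> 0"
  define Tb where "Tb = unit_sq \<inter> {p. snd p \<le> fst p \<and> fst p + snd p \<le> 1}"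
  define Tr where "Tr = unit_sq \<inter> {p. snd p \<le> fst p \<and> 1 \<le> fst p + snd p}"
  define Tt where "Tt = unit_sq \<inter> {p. fst p \<le> snd p \<and> 1 \<le> fst p + snd p}"
  define Tl where "Tl = unit_sq \<inter> {p. fst p \<le> snd p \<and> fst p + snd p \<le> 1}"
  have cl: "closed Tb" "closed Tr" "closed Tt" "closed Tl"
    unfolding Tb_def Tr_def Tt_def Tl_def
    by (intro closed_Int closed_Times closed_atLeastAtMost closed_Collect_conj closed_Collect_le continuous_intros; simp)+
  have polar: "continuous_on Tb (sqd_b m)" "continuous_on Tr (sqd_r m)"
    "continuous_on Tt (sqd_t m)" "continuous_on Tl (sqd_l m)"
    unfolding sqd_b_def[abs_def] sqd_r_def[abs_def] sqd_t_def[abs_def] sqd_l_def[abs_def]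
    by (rule continuous_on_polar;
        use m in \<open>auto intro!: continuous_intros simp: Tb_def Tr_def Tt_def Tl_def\<close>)+
  have "continuous_on Tb (square_disk m)"
    using polar(1) by (rule continuous_on_eq) (auto simp: Tb_def square_disk_def)
  moreover have "continuous_on Tr (square_disk m)"
    using polar(2) by (rule continuous_on_eq) (auto simp: Tr_def square_disk_def sqd_b_eq_r)
  moreover have "continuous_on Tt (square_disk m)"
    using polar(3) by (rule continuous_on_eq) (simp add: Tt_def square_disk_eq_sqd_t)
  moreover have "continuous_on Tl (square_disk m)"
    using polar(4) by (rule continuous_on_eq) (simp add: Tl_def square_disk_eq_sqd_l m)
  moreover have "unit_sq = Tb \<union> Tr \<union> Tt \<union> Tl" unfolding Tb_def Tr_def Tt_def Tl_def by auto
  ultimately show ?thesis by (metis cl closed_Un continuous_on_closed_Un)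
qed

(* Index of the piece containing x when [0,1] is cut into length W equal pieces; the min puts
   x = 1 into the last piece. *)
definition seg_index :: "'b list \<Rightarrow> real \<Rightarrow> nat" where
  "seg_index W x = min (nat \<lfloor>x * real (length W)\<rfloor>) (length W - 1)"

lemma seg_index_less: "W \<noteq> [] \<Longrightarrow> seg_index W x < length W"
  by (cases W) (auto simp: seg_index_def)

lemma seg_index_bounds:
  assumes "W \<noteq> []" "0 \<le> x" "x \<le> 1"
  shows "seg_index W x < length W \<and> real (seg_index W x) \<le> x * real (length W) \<and> x * real (length W) \<le> real (seg_index W x) + 1"
proof -
  let ?N = "length W"
  define j where "j = seg_index W x"
  have N: "?N > 0" using assms by simp
  have xN: "0 \<le> x * real ?N" "x * real ?N \<le> real ?N" using assms by (auto simp: mult_left_le_one_le)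
  have jN: "j < ?N" using N by (simp add: j_def seg_index_def min_less_iff_disj)
  have f: "real (nat \<lfloor>x * real ?N\<rfloor>) = of_int \<lfloor>x * real ?N\<rfloor>" using xN by simp
  have f2: "of_int \<lfloor>x * real ?N\<rfloor> \<le> x * real ?N" by (rule of_int_floor_le)
  have "real j \<le> real (nat \<lfloor>x * real ?N\<rfloor>)" unfolding j_def seg_index_def by simp
  then have l: "real j \<le> x * real ?N" using f f2 by linarith
  have r: "x * real ?N \<le> real j + 1"
  proof (cases "nat \<lfloor>x * real ?N\<rfloor> \<le> ?N - 1")
    case True
    then have "j = nat \<lfloor>x * real ?N\<rfloor>" by (simp add: j_def seg_index_def)
    then show ?thesis using xN by linarith
  next
    case False
    then have "j = ?N - 1" by (simp add: j_def seg_index_def)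
    moreover have "real (?N - 1) + 1 = real ?N" using N by (simp add: of_nat_diff Suc_le_eq)
    ultimately show ?thesis using xN by simp
  qed
  show ?thesis using jN l r by (simp add: j_def)
qed

lemma seg_index_other:
  assumes j: "j < length W" "real j \<le> x * real (length W)" "x * real (length W) \<le> real j + 1"
    and ne: "seg_index W x \<noteq> j"
  shows "seg_index W x = Suc j \<and> x * real (length W) = real j + 1"
proof -
  let ?N = "length W"
  show ?thesis
  proof (cases "x * real ?N < real j + 1")
    case True
    then have "\<lfloor>x * real ?N\<rfloor> = int j" using j by (simp add: floor_eq_iff)
    then have "seg_index W x = j" using j by (simp add: seg_index_def)
    then show ?thesis using ne by simp
  next
    case False
    then have eq: "x * real ?N = real j + 1" using j by simp
    then have fl: "nat \<lfloor>x * real ?N\<rfloor> = Suc j" by simp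
    show ?thesis
    proof (cases "Suc j < ?N")
      case True then show ?thesis using fl eq by (simp add: seg_index_def)
    next
      case False then have "seg_index W x = j" using fl j by (simp add: seg_index_def)
      then show ?thesis using ne by simp
    qed
  qed
qed

lemma seg_index_0: "seg_index W 0 = 0" by (simp add: seg_index_def)

lemma seg_index_1: "W \<noteq> [] \<Longrightarrow> seg_index W 1 = length W - 1" by (simp add: seg_index_def)

lemma nat_floor_add: "0 \<le> s \<Longrightarrow> s < 1 \<Longrightarrow> nat \<lfloor>real k + s\<rfloor> = k"
proof -
  assume "0 \<le> s" "s < 1"
  then have "\<lfloor>real k + s\<rfloor> = int k" by (simp add: floor_eq_iff)
  then show ?thesis by simp
qed

definition flip_letter :: "'b \<times> bool \<Rightarrow> 'b \<times> bool" where "flip_letter x = (fst x, \<not> snd x)"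

lemma inv_word_Nil[simp]: "inv_word [] = []" by (simp add: inv_word_def)

lemma inv_word_Cons[simp]: "inv_word (x # w) = inv_word w @ [flip_letter x]"
  by (cases x) (simp add: inv_word_def flip_letter_def)

lemma inv_word_append[simp]: "inv_word (u @ w) = inv_word w @ inv_word u"
  by (simp add: inv_word_def)

lemma inv_word_inv_word[simp]: "inv_word (inv_word w) = w"
  by (induction w) (simp_all add: inv_word_def flip_letter_def split_def)

lemma length_inv_word[simp]: "length (inv_word w) = length w" by (simp add: inv_word_def)

lemma geq_context: "geq Q u v \<Longrightarrow> geq Q (p @ u @ q) (p @ v @ q)"
proof (induction rule: geq.induct)
  case (refl w) then show ?case by (rule geq.refl)
next
  case (sym u v) then show ?case by (blast intro: geq.sym)
next
  case (trans u v w) then show ?case by (metis geq.trans)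
next
  case (cancel p' x b q') then show ?case
    using geq.cancel[of Q "p @ p'" x b "q' @ q"] by simp
next
  case (rel r p' q') then show ?case
    using geq.rel[of r Q "p @ p'" "q' @ q"] by simp
qed

lemma geq_cancel_inv: "geq Q (p @ w @ inv_word w @ q) (p @ q)"
proof (induction w arbitrary: p q)
  case Nil then show ?case by (simp add: geq.refl)
next
  case (Cons x w)
  have inner: "geq Q ((p @ [x]) @ w @ inv_word w @ ([flip_letter x] @ q)) ((p @ [x]) @ [flip_letter x] @ q)"
    by (rule Cons)
  have outer: "geq Q (p @ [(fst x, snd x), (fst x, \<not> snd x)] @ q) (p @ q)" by (rule geq.cancel)
  show ?case using geq.trans[OF inner] outer by (simp add: flip_letter_def)
qed

lemma geq_cancel_inv': "geq Q (p @ inv_word w @ w @ q) (p @ q)"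
  using geq_cancel_inv[of Q p "inv_word w" q] by simp

lemma tsum_append[simp]: "tsum (u @ w) = tsum u + tsum w" by (simp add: tsum_def)

lemma tsum_Nil[simp]: "tsum [] = 0" by (simp add: tsum_def)

lemma tsum_Cons[simp]: "tsum (x # w) = (if fst x = T then (if snd x then -1 else 1) else 0) + tsum w"
  by (simp add: tsum_def split_def)

lemma tsum_inv_word[simp]: "tsum (inv_word w) = - tsum w"
  by (induction w) (auto simp: flip_letter_def)

lemma tsum_liftw[simp]: "tsum (liftw w) = 0"
  by (induction w) (auto simp: liftw_def)

lemma tsum_replicate_T[simp]: "tsum (replicate n (T, False)) = int n"
  by (induction n) auto

lemma tsum_relators: "r \<in> relators A R phi \<Longrightarrow> tsum r = 0"
  by (auto simp: relators_def conjrel_def)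

lemma tsum_geq: "geq (relators A R phi) u v \<Longrightarrow> tsum u = tsum v"
  by (induction rule: geq.induct) (auto simp: tsum_relators)

lemma over_append[simp]: "over S (u @ w) \<longleftrightarrow> over S u \<and> over S w"
  by (auto simp: over_def)

lemma over_Nil[simp]: "over S []" by (simp add: over_def)

lemma over_Cons[simp]: "over S (x # w) \<longleftrightarrow> fst x \<in> S \<and> over S w"
  by (simp add: over_def)

lemma over_inv_word[simp]: "over S (inv_word w) \<longleftrightarrow> over S w"
  by (induction w) (auto simp: flip_letter_def)

lemma over_take: "over S w \<Longrightarrow> over S (take k w)"
  by (auto simp: over_def dest: in_set_takeD)

lemma over_nth: "over S w \<Longrightarrow> k < length w \<Longrightarrow> fst (w ! k) \<in> S"
  by (auto simp: over_def)

definition A_letter :: "'a set \<Rightarrow> 'a gen \<times> bool \<Rightarrow> bool" where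
  "A_letter A c \<longleftrightarrow> (\<exists>b\<in>A. fst c = L b)"

locale cayley_complex =
  fixes A :: "'a set" and R :: "'a fword set" and phi :: "'a \<Rightarrow> 'a fword"
  assumes phi_over: "\<forall>b\<in>A. over A (phi b)" and R_over: "\<forall>r\<in>R. over A r"
begin

abbreviation "Rels \<equiv> relators A R phi"
abbreviation "cl \<equiv> cls A R phi"
abbreviation "Verts \<equiv> verts A R phi"
abbreviation "act \<equiv> gapp A R phi"
abbreviation "Gens \<equiv> gens A"

lemma cls_eqI: "geq Rels x y \<Longrightarrow> cl x = cl y"
  unfolding cls_def by (auto intro: geq.trans geq.sym)

lemma cls_self: "over Gens x \<Longrightarrow> x \<in> cl x"
  unfolding cls_def by (auto intro: geq.refl)

lemma cls_memD: "u \<in> cl x \<Longrightarrow> over Gens u \<and> geq Rels u x"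
  unfolding cls_def by auto

lemma verts_cls: "g \<in> Verts \<Longrightarrow> \<exists>w. over Gens w \<and> g = cl w"
  unfolding verts_def by auto

lemma rep_in: "g \<in> Verts \<Longrightarrow> rep g \<in> g"
  unfolding rep_def by (metis verts_cls cls_self someI)

lemma rep_over: "g \<in> Verts \<Longrightarrow> over Gens (rep g)"
  by (metis rep_in verts_cls cls_memD)

lemma cls_rep: "g \<in> Verts \<Longrightarrow> cl (rep g) = g"
  by (metis rep_in verts_cls cls_memD cls_eqI)

lemma cls_in_Verts: "over Gens w \<Longrightarrow> cl w \<in> Verts"
  unfolding verts_def by auto

lemma act_cls: "over Gens u \<Longrightarrow> act (cl u) w = cl (u @ w)"
proof -
  assume u: "over Gens u"
  have "rep (cl u) \<in> cl u" using rep_in[OF cls_in_Verts[OF u]] .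
  then have "geq Rels (rep (cl u)) u" by (simp add: cls_memD)
  then have "geq Rels ([] @ rep (cl u) @ w) ([] @ u @ w)" by (rule geq_context)
  then show ?thesis unfolding gapp_def by (simp add: cls_eqI)
qed

lemma act_in_Verts: "g \<in> Verts \<Longrightarrow> over Gens w \<Longrightarrow> act g w \<in> Verts"
  unfolding gapp_def by (rule cls_in_Verts) (simp add: rep_over)

lemma act_append: "g \<in> Verts \<Longrightarrow> over Gens u \<Longrightarrow> act (act g u) w = act g (u @ w)"
  unfolding gapp_def[of _ _ _ g] by (subst act_cls) (auto simp: rep_over)

lemma act_Nil: "g \<in> Verts \<Longrightarrow> act g [] = g"
  unfolding gapp_def by (simp add: cls_rep)

lemma act_geq: "geq Rels u w \<Longrightarrow> act g u = act g w"
  unfolding gapp_def by (rule cls_eqI) (rule geq_context[of _ _ _ _ "[]", simplified])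

lemma gstep_act: "gstep A R phi g l = act g [(l, False)]"
  by (simp add: gstep_def)

lemma lev_cls: "over Gens u \<Longrightarrow> lev (cl u) = tsum u"
  unfolding lev_def
  by (metis rep_in cls_in_Verts cls_memD tsum_geq)

lemma lev_act: "g \<in> Verts \<Longrightarrow> over Gens w \<Longrightarrow> lev (act g w) = lev g + tsum w"
  unfolding gapp_def by (simp add: lev_cls rep_over) (simp add: lev_def)

lemma T_in_Gens[simp]: "T \<in> Gens" by (simp add: gens_def)

lemma L_in_Gens[simp]: "L b \<in> Gens \<longleftrightarrow> b \<in> A" by (auto simp: gens_def)

lemma over_liftw: "over A w \<Longrightarrow> over Gens (liftw w)"
  by (induction w) (auto simp: liftw_def)

lemma length_liftw[simp]: "length (liftw w) = length w" by (simp add: liftw_def)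

lemma conjrel_over: "b \<in> A \<Longrightarrow> over A (phi b) \<Longrightarrow> over Gens (conjrel phi b)"
  by (simp add: conjrel_def over_liftw)

lemma conjrel_in_Rels: "b \<in> A \<Longrightarrow> conjrel phi b \<in> Rels"
  by (simp add: relators_def)

lemma act_relator: "g \<in> Verts \<Longrightarrow> r \<in> Rels \<Longrightarrow> act g r = g"
proof -
  assume g: "g \<in> Verts" and r: "r \<in> Rels"
  have "geq Rels ([] @ r @ []) ([] @ [])" by (rule geq.rel[OF r])
  then have "act g r = act g []" using act_geq by simp
  then show ?thesis using act_Nil[OF g] by simp
qed

lemma act_cancel: "g \<in> Verts \<Longrightarrow> act g (p @ [(x, e), (x, \<not> e)] @ q) = act g (p @ q)"
  by (rule act_geq, rule geq.cancel)

definition phi_letter :: "'a gen \<times> bool \<Rightarrow> 'a gword" where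
  "phi_letter c = (case fst c of L b \<Rightarrow> (if snd c then inv_word (liftw (phi b)) else liftw (phi b)) | T \<Rightarrow> [])"

lemma phi_letter_over: "b \<in> A \<Longrightarrow> over A (phi b) \<Longrightarrow> over Gens (phi_letter (L b, e))"
  by (simp add: phi_letter_def over_liftw)

lemma tsum_phi_letter[simp]: "tsum (phi_letter c) = 0"
  by (simp add: phi_letter_def split: gen.split)

lemma geq_conj: "b \<in> A \<Longrightarrow> geq Rels [(L b, e), (T, False)] ((T, False) # phi_letter (L b, e))"
proof -
  assume b: "b \<in> A"
  let ?W = "liftw (phi b)"
  have r: "conjrel phi b \<in> Rels" using b by (rule conjrel_in_Rels)
  show ?thesis
  proof (cases e)
    case False
    have cancel_T: "geq Rels ([(L b,False),(T,False)] @ inv_word ?W @ [(T,True),(T,False)] @ ?W)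
                    ([(L b,False),(T,False)] @ inv_word ?W @ ?W)"
      using geq.cancel[of Rels "[(L b,False),(T,False)] @ inv_word ?W" T True ?W] by simp
    have cancel_W: "geq Rels ([(L b,False),(T,False)] @ inv_word ?W @ ?W @ []) ([(L b,False),(T,False)] @ [])"
      by (rule geq_cancel_inv')
    have relator: "geq Rels ([] @ conjrel phi b @ ((T,False) # ?W)) ([] @ ((T,False) # ?W))"
      by (rule geq.rel[OF r])
    have "geq Rels [(L b,False),(T,False)] ([(L b,False),(T,False)] @ inv_word ?W @ [(T,True),(T,False)] @ ?W)"
      using cancel_T cancel_W by (auto intro: geq.sym geq.trans)
    then show ?thesis using relator False by (auto simp: conjrel_def phi_letter_def intro: geq.trans)
  next
    case True
    have relator: "geq Rels ([(L b,True)] @ conjrel phi b @ [(T,False)]) ([(L b,True)] @ [(T,False)])"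
      by (rule geq.rel[OF r])
    have cancel_b: "geq Rels ([] @ [(L b,True),(L b,False)] @ ((T,False) # inv_word ?W @ [(T,True),(T,False)]))
        ([] @ ((T,False) # inv_word ?W @ [(T,True),(T,False)]))"
      using geq.cancel[of Rels "[]" "L b" True "(T,False) # inv_word ?W @ [(T,True),(T,False)]"] by simp
    have cancel_T: "geq Rels (((T,False) # inv_word ?W) @ [(T,True),(T,False)] @ []) (((T,False) # inv_word ?W) @ [])"
      using geq.cancel[of Rels "(T,False) # inv_word ?W" T True "[]"] by simp
    have "geq Rels ([(L b,True)] @ conjrel phi b @ [(T,False)]) ((T,False) # inv_word ?W)"
      using cancel_b cancel_T by (auto simp: conjrel_def intro: geq.trans)
    then show ?thesis using relator True by (auto simp: phi_letter_def intro: geq.trans geq.sym)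
  qed
qed

lemma act_conj: "g \<in> Verts \<Longrightarrow> b \<in> A \<Longrightarrow> act g [(L b, e), (T, False)] = act g ((T, False) # phi_letter (L b, e))"
  by (rule act_geq, rule geq_context[of _ _ _ "[]" "[]", simplified], rule geq_conj)

definition letter_pt :: "'a gword set \<Rightarrow> 'a gen \<times> bool \<Rightarrow> real \<Rightarrow> 'a xpt" where
  "letter_pt u c s = (if \<not> snd c then canon_edge A R phi u (fst c) s
                else canon_edge A R phi (act u [c]) (fst c) (1 - s))"

lemma letter_pt_0: "u \<in> Verts \<Longrightarrow> fst c \<in> Gens \<Longrightarrow> letter_pt u c 0 = Vert u"
proof (cases c)
  case (Pair l e)
  assume u: "u \<in> Verts" and l: "fst c \<in> Gens"
  show ?thesis
  proof (cases e)
    case True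
    have "act (act u [(l,True)]) [(l,False)] = act u ([] @ [(l,True),(l,\<not>True)] @ [])"
      using u l Pair by (simp add: act_append)
    also have "\<dots> = u" using act_cancel[OF u, of "[]" l True "[]"] by (simp add: act_Nil u)
    finally show ?thesis using Pair True by (simp add: letter_pt_def canon_edge_def gstep_act)
  qed (simp add: letter_pt_def canon_edge_def Pair)
qed

lemma letter_pt_1: "u \<in> Verts \<Longrightarrow> fst c \<in> Gens \<Longrightarrow> letter_pt u c 1 = Vert (act u [c])"
  by (cases c) (auto simp: letter_pt_def canon_edge_def gstep_act)

lemma letter_pt_flip: "u \<in> Verts \<Longrightarrow> fst c \<in> Gens \<Longrightarrow> letter_pt u c s = letter_pt (act u [c]) (flip_letter c) (1 - s)"
proof (cases c)
  case (Pair l e)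
  assume u: "u \<in> Verts" and l: "fst c \<in> Gens"
  show ?thesis
  proof (cases e)
    case False
    have "act (act u [(l,False)]) [(l,True)] = act u ([] @ [(l,False),(l,\<not>False)] @ [])"
      using u l Pair by (simp add: act_append)
    also have "\<dots> = u" using act_cancel[OF u, of "[]" l False "[]"] by (simp add: act_Nil u)
    finally show ?thesis using Pair False by (simp add: letter_pt_def flip_letter_def)
  qed (simp add: letter_pt_def flip_letter_def Pair)
qed

lemma inv_word_nth: "i < length w \<Longrightarrow> inv_word w ! i = flip_letter (w ! (length w - Suc i))"
  by (simp add: inv_word_def rev_nth flip_letter_def split_def)

lemma take_inv_word: "i \<le> length w \<Longrightarrow> take i (inv_word w) = inv_word (drop (length w - i) w)"
  by (simp add: inv_word_def take_rev drop_map)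

lemma bdry_arc:
  assumes h: "h \<in> Verts" and w: "over Gens w" and k: "k < length w" and s: "0 \<le> s" "s < 1"
  shows "bdry A R phi h w (cis (2 * pi * ((real k + s) / real (length w)))) = letter_pt (act h (take k w)) (w ! k) s"
proof -
  let ?n = "length w"
  have n: "?n > 0" using k by linarith
  have le: "real k + s < real ?n" using k s by linarith
  have th0: "0 \<le> 2 * pi * ((real k + s) / real ?n)" using s by simp
  have q: "(real k + s) / real ?n < 1" using le n by simp
  have "2 * pi * ((real k + s) / real ?n) < 2 * pi * 1" by (rule mult_strict_left_mono[OF q]) simp
  then have th1: "2 * pi * ((real k + s) / real ?n) < 2 * pi" by simp
  have arg: "Arg2pi (cis (2 * pi * ((real k + s) / real ?n))) = 2 * pi * ((real k + s) / real ?n)"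
    unfolding cis_conv_exp using th0 th1 by (subst Arg2pi_exp) auto
  have e1: "real ?n * (Arg2pi (cis (2 * pi * ((real k + s) / real ?n))) / (2 * pi)) = real k + s"
    unfolding arg using n by (simp add: field_simps)
  have fl: "nat \<lfloor>real k + s\<rfloor> = k" using s by (rule nat_floor_add)
  have wne: "w \<noteq> []" using k by auto
  have tk: "act (act h (take k w)) [w ! k] = act h (take (Suc k) w)"
    using h w k by (simp add: act_append over_take take_Suc_conv_app_nth)
  show ?thesis
    unfolding bdry_def Let_def e1 fl using n tk wne by (simp add: letter_pt_def)
qed

lemma letter_pt_next:
  assumes h: "h \<in> Verts" and w: "over Gens w" and k: "Suc k < length w"
  shows "letter_pt (act h (take k w)) (w ! k) 1 = letter_pt (act h (take (Suc k) w)) (w ! Suc k) 0"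
proof -
  have v1: "act h (take k w) \<in> Verts" "act h (take (Suc k) w) \<in> Verts"
    using h w by (simp_all add: act_in_Verts over_take)
  have tk: "act (act h (take k w)) [w ! k] = act h (take (Suc k) w)"
    using h w k by (simp add: act_append over_take take_Suc_conv_app_nth)
  show ?thesis using v1 tk w k
    by (simp add: letter_pt_1 letter_pt_0 over_nth)
qed

lemma bdry_arc_closed:
  assumes h: "h \<in> Verts" and w: "over Gens w" and hw: "act h w = h" and k: "k < length w"
    and s: "0 \<le> s" "s \<le> 1"
  shows "bdry A R phi h w (cis (2 * pi * ((real k + s) / real (length w)))) = letter_pt (act h (take k w)) (w ! k) s"
proof (cases "s < 1")
  case True then show ?thesis using bdry_arc[OF h w k s(1)] by simp
next
  case False
  then have s1: "s = 1" using s by simp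
  show ?thesis
  proof (cases "Suc k < length w")
    case True
    have "bdry A R phi h w (cis (2 * pi * ((real (Suc k) + 0) / real (length w)))) = letter_pt (act h (take (Suc k) w)) (w ! Suc k) 0"
      by (rule bdry_arc[OF h w True]) auto
    then show ?thesis using s1 letter_pt_next[OF h w True] by (simp add: add.commute)
  next
    case False
    then have kn: "Suc k = length w" using k by simp
    have c2: "cis (pi * 2) = 1" by (simp add: complex_eq_iff)
    have c1: "cis (2 * pi * ((real k + s) / real (length w))) = cis (2 * pi * ((real 0 + 0) / real (length w)))"
      using s1 kn c2 by (simp add: field_simps flip: of_nat_Suc)
    have "bdry A R phi h w (cis (2 * pi * ((real 0 + 0) / real (length w)))) = letter_pt (act h (take 0 w)) (w ! 0) 0"
      by (rule bdry_arc[OF h w]) (use k in auto)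
    also have "\<dots> = Vert h"
    proof -
      have "fst (w ! 0) \<in> Gens" using w k by (intro over_nth) auto
      then show ?thesis using h by (simp add: act_Nil letter_pt_0)
    qed
    also have "\<dots> = letter_pt (act h (take k w)) (w ! k) 1"
    proof -
      have "act (act h (take k w)) [w ! k] = act h (take (Suc k) w)"
        using h w k by (simp add: act_append over_take take_Suc_conv_app_nth)
      then show ?thesis using h w k kn hw by (simp add: letter_pt_1 act_in_Verts over_take over_nth)
    qed
    finally show ?thesis using c1 s1 by simp
  qed
qed

definition path_pt :: "'a gword set \<Rightarrow> 'a gword \<Rightarrow> real \<Rightarrow> 'a xpt" where
  "path_pt u W x = (if W = [] then Vert u else
     letter_pt (act u (take (seg_index W x) W)) (W ! seg_index W x) (x * real (length W) - real (seg_index W x)))"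

lemma path_pt_segment:
  assumes u: "u \<in> Verts" and W: "over Gens W" and j: "j < length W"
    and x: "real j \<le> x * real (length W)" "x * real (length W) \<le> real j + 1"
  shows "path_pt u W x = letter_pt (act u (take j W)) (W ! j) (x * real (length W) - real j)"
proof (cases "seg_index W x = j")
  case True then show ?thesis using j by (auto simp: path_pt_def)
next
  case False
  then have next_seg: "seg_index W x = Suc j" "x * real (length W) = real j + 1"
    using seg_index_other[OF j x] by auto
  then have "Suc j < length W" using seg_index_less[of W x] j by (cases W) auto
  then show ?thesis using next_seg j letter_pt_next[OF u W] by (auto simp: path_pt_def)
qed

lemma act_inv_word_drop:
  assumes u: "u \<in> Verts" and W: "over Gens W" and i: "i < length W"
  shows "act (act u W) (inv_word (drop (Suc i) W)) = act (act u (take i W)) [W ! i]"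
proof -
  have "act (act u W) (inv_word (drop (Suc i) W)) = act u (W @ inv_word (drop (Suc i) W))"
    using u W by (simp add: act_append)
  also have "W @ inv_word (drop (Suc i) W) = take (Suc i) W @ drop (Suc i) W @ inv_word (drop (Suc i) W) @ []"
    by simp
  also have "act u \<dots> = act u (take (Suc i) W @ [])" by (rule act_geq[OF geq_cancel_inv])
  also have "\<dots> = act (act u (take i W)) [W ! i]"
    using u W i by (simp add: act_append over_take take_Suc_conv_app_nth)
  finally show ?thesis .
qed

lemma path_pt_inv_word:
  assumes u: "u \<in> Verts" and W: "over Gens W" and x: "0 \<le> x" "x \<le> 1"
  shows "path_pt u W (1 - x) = path_pt (act u W) (inv_word W) x"
proof (cases "W = []")
  case True then show ?thesis using u by (simp add: path_pt_def act_Nil)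
next
  case False
  let ?N = "length W"
  obtain j where j: "j < ?N" "real j \<le> x * real ?N" "x * real ?N \<le> real j + 1"
    using seg_index_bounds[OF False x] by blast
  define j' where "j' = ?N - Suc j"
  have j': "j' < ?N" "real j' \<le> (1 - x) * real ?N" "(1 - x) * real ?N \<le> real j' + 1"
    using j by (auto simp: j'_def of_nat_diff algebra_simps)
  have Wi: "over Gens (inv_word W)" using W by simp
  have uW: "act u W \<in> Verts" using u W by (simp add: act_in_Verts)
  have "path_pt (act u W) (inv_word W) x = letter_pt (act (act u W) (take j (inv_word W))) (inv_word W ! j) (x * real ?N - real j)"
    using path_pt_segment[OF uW Wi, of j x] j by simp
  also have "inv_word W ! j = flip_letter (W ! j')" using j by (simp add: inv_word_nth j'_def)
  also have "take j (inv_word W) = inv_word (drop (Suc j') W)"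
    using j by (simp add: take_inv_word j'_def Suc_diff_Suc)
  also have "act (act u W) (inv_word (drop (Suc j') W)) = act (act u (take j' W)) [W ! j']"
    by (rule act_inv_word_drop[OF u W j'(1)])
  finally have r: "path_pt (act u W) (inv_word W) x = letter_pt (act (act u (take j' W)) [W ! j']) (flip_letter (W ! j')) (x * real ?N - real j)" .
  have l: "path_pt u W (1 - x) = letter_pt (act u (take j' W)) (W ! j') ((1 - x) * real ?N - real j')"
    by (rule path_pt_segment[OF u W j'])
  have "letter_pt (act u (take j' W)) (W ! j') ((1 - x) * real ?N - real j') =
        letter_pt (act (act u (take j' W)) [W ! j']) (flip_letter (W ! j')) (1 - ((1 - x) * real ?N - real j'))"
    using u W j' by (intro letter_pt_flip) (simp_all add: act_in_Verts over_take over_nth)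
  also have "1 - ((1 - x) * real ?N - real j') = x * real ?N - real j"
    using j by (simp add: j'_def of_nat_diff algebra_simps)
  finally show ?thesis using l r by simp
qed

lemma bdry_subword:
  assumes h: "h \<in> Verts" and w: "over Gens w" and hw: "act h w = h"
    and split: "w = p @ V @ q" and q: "q \<noteq> []" and y: "0 \<le> y" "y \<le> 1"
  shows "bdry A R phi h w (cis (2 * pi * ((real (length p) + y * real (length V)) / real (length w))))
    = path_pt (act h p) V y"
proof (cases "V = []")
  case True
  have "length p < length w" using split q by simp
  from bdry_arc_closed[OF h w hw this, of 0] have "bdry A R phi h w (cis (2 * pi * (real (length p) / real (length w))))
      = letter_pt (act h p) (w ! length p) 0"
    using split by simp
  also have "\<dots> = Vert (act h p)"
    using h w split True q by (intro letter_pt_0) (auto simp: act_in_Verts nth_append over_def)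
  finally show ?thesis using True by (simp add: path_pt_def)
next
  case False
  let ?j = "seg_index V y"
  have j: "?j < length V" "real ?j \<le> y * real (length V)" "y * real (length V) \<le> real ?j + 1"
    using seg_index_bounds[OF False y] by auto
  have p: "over Gens p" and V: "over Gens V" using w split by auto
  have "length p + ?j < length w" using split j(1) q by simp
  from bdry_arc_closed[OF h w hw this, of "y * real (length V) - real ?j"]
  have "bdry A R phi h w (cis (2 * pi * ((real (length p) + y * real (length V)) / real (length w))))
      = letter_pt (act h (p @ take ?j V)) (V ! ?j) (y * real (length V) - real ?j)"
    using split j by (simp add: nth_append)
  also have "\<dots> = path_pt (act h p) V y"
    using path_pt_segment[OF act_in_Verts[OF h p] V j] h p by (simp add: act_append)
  finally show ?thesis .
qed

abbreviation "Pcar \<equiv> pre_carrier A R phi"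
abbreviation "Ptop \<equiv> pre_top A R phi"
abbreviation "Cay \<equiv> cayley2 A R phi"
abbreviation "cn \<equiv> canon A R phi"

definition "pre_open U \<longleftrightarrow> U \<subseteq> Pcar
      \<and> (\<forall>g l. openin (top_of_set {0..1}) {s \<in> {0..1}. Edge g l s \<in> U})
      \<and> (\<forall>g c. openin (top_of_set (cball 0 1)) {z \<in> cball 0 1. Cell g c z \<in> U})"

lemma istopology_pre_open: "istopology pre_open"
  unfolding istopology_def
proof (intro conjI allI impI)
  fix U V assume a: "pre_open U" "pre_open V"
  have e: "{s \<in> {0..1}. Edge g l s \<in> U \<inter> V} = {s \<in> {0..1}. Edge g l s \<in> U} \<inter> {s \<in> {0..1}. Edge g l s \<in> V}" for g l
    by auto
  have c: "{z \<in> cball 0 1. Cell g c z \<in> U \<inter> V} = {z \<in> cball 0 1. Cell g c z \<in> U} \<inter> {z \<in> cball 0 1. Cell g c z \<in> V}" for g c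
    by auto
  show "pre_open (U \<inter> V)" using a unfolding pre_open_def e c by auto
next
  fix K assume a: "\<forall>U\<in>K. pre_open U"
  have e: "{s \<in> {0..1}. Edge g l s \<in> \<Union>K} = \<Union>((\<lambda>U. {s \<in> {0..1}. Edge g l s \<in> U}) ` K)" for g l
    by auto
  have c: "{z \<in> cball 0 1. Cell g c z \<in> \<Union>K} = \<Union>((\<lambda>U. {z \<in> cball 0 1. Cell g c z \<in> U}) ` K)" for g c
    by auto
  show "pre_open (\<Union>K)" using a unfolding pre_open_def e c by (auto intro!: openin_Union)
qed

lemma openin_pre: "openin Ptop U \<longleftrightarrow> pre_open U"
proof -
  have "pre_top A R phi = topology pre_open" unfolding pre_top_def pre_open_def ..
  then show ?thesis using istopology_pre_open by simp
qed

lemma topspace_pre: "topspace Ptop = Pcar"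
proof -
  have e: "{s \<in> {0..1::real}. Edge g l s \<in> Pcar} = (if g \<in> Verts \<and> l \<in> Gens then {0..1} else {})" for g l
    by (auto simp: pre_carrier_def)
  have c: "{z \<in> cball (0::complex) 1. Cell g c z \<in> Pcar} = (if g \<in> Verts \<and> c \<in> cells A R then cball 0 1 else {})" for g c
    by (auto simp: pre_carrier_def)
  have "pre_open Pcar" unfolding pre_open_def e c by simp
  then have "openin Ptop Pcar" by (simp add: openin_pre)
  moreover have "\<And>U. openin Ptop U \<Longrightarrow> U \<subseteq> Pcar" by (simp add: openin_pre pre_open_def)
  ultimately show ?thesis by (metis openin_subset openin_topspace subset_antisym)
qed

lemma topspace_Cay: "topspace Cay = cn ` Pcar"
  by (simp add: cayley2_def topspace_qtop topspace_pre)

lemma continuous_map_canon: "continuous_map Ptop Cay cn"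
  unfolding cayley2_def by (rule continuous_map_qtop)

lemma continuous_map_from_Cay: "continuous_map Ptop Y (\<lambda>x. g (cn x)) \<Longrightarrow> continuous_map Cay Y g"
  unfolding cayley2_def by (rule continuous_map_from_qtop)

lemma continuous_map_into_cell:
  assumes Z: "continuous_map X (top_of_set (cball 0 1)) Z" and g: "g \<in> Verts" and c: "c \<in> cells A R"
  shows "continuous_map X Ptop (\<lambda>x. Cell g c (Z x))"
  unfolding continuous_map_def topspace_pre
proof (intro conjI allI impI)
  have "Z x \<in> cball 0 1" if "x \<in> topspace X" for x
    using Z that by (auto simp: continuous_map_def)
  then show "(\<lambda>x. Cell g c (Z x)) \<in> topspace X \<rightarrow> Pcar" using g c by (auto simp: pre_carrier_def)
next
  fix U assume "openin Ptop U"
  then have o: "openin (top_of_set (cball 0 1)) {z \<in> cball 0 1. Cell g c z \<in> U}"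
    by (simp add: openin_pre pre_open_def)
  have zin: "Z x \<in> cball 0 1" if "x \<in> topspace X" for x
    using Z that by (auto simp: continuous_map_def)
  have "{x \<in> topspace X. Cell g c (Z x) \<in> U} = {x \<in> topspace X. Z x \<in> {z \<in> cball 0 1. Cell g c z \<in> U}}"
    using zin by auto
  moreover have "openin X {x \<in> topspace X. Z x \<in> {z \<in> cball 0 1. Cell g c z \<in> U}}"
    using Z o unfolding continuous_map_def by blast
  ultimately show "openin X {x \<in> topspace X. Cell g c (Z x) \<in> U}" by simp
qed

lemma continuous_map_into_edge:
  assumes Z: "continuous_map X (top_of_set {0..1}) Z" and g: "g \<in> Verts" and l: "l \<in> Gens"
  shows "continuous_map X Ptop (\<lambda>x. Edge g l (Z x))"
  unfolding continuous_map_def topspace_pre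
proof (intro conjI allI impI)
  have "Z x \<in> {0..1}" if "x \<in> topspace X" for x
    using Z that by (auto simp: continuous_map_def)
  then show "(\<lambda>x. Edge g l (Z x)) \<in> topspace X \<rightarrow> Pcar" using g l by (auto simp: pre_carrier_def)
next
  fix U assume "openin Ptop U"
  then have o: "openin (top_of_set {0..1}) {s \<in> {0..1}. Edge g l s \<in> U}"
    by (simp add: openin_pre pre_open_def)
  have zin: "Z x \<in> {0..1}" if "x \<in> topspace X" for x
    using Z that by (auto simp: continuous_map_def)
  have "{x \<in> topspace X. Edge g l (Z x) \<in> U} = {x \<in> topspace X. Z x \<in> {s \<in> {0..1}. Edge g l s \<in> U}}"
    using zin by auto
  moreover have "openin X {x \<in> topspace X. Z x \<in> {s \<in> {0..1}. Edge g l s \<in> U}}"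
    using Z o unfolding continuous_map_def by blast
  ultimately show "openin X {x \<in> topspace X. Edge g l (Z x) \<in> U}" by simp
qed

lemma continuous_map_from_pre:
  assumes E: "\<And>g l. g \<in> Verts \<Longrightarrow> l \<in> Gens \<Longrightarrow> continuous_map (top_of_set {0..1}) Y (\<lambda>s. F (Edge g l s))"
    and C: "\<And>g c. g \<in> Verts \<Longrightarrow> c \<in> cells A R \<Longrightarrow> continuous_map (top_of_set (cball 0 1)) Y (\<lambda>z. F (Cell g c z))"
    and V: "\<And>g. g \<in> Verts \<Longrightarrow> F (Vert g) \<in> topspace Y"
  shows "continuous_map Ptop Y F"
  unfolding continuous_map_def topspace_pre
proof (intro conjI allI impI)
  show "F \<in> Pcar \<rightarrow> topspace Y"
  proof
    fix p assume "p \<in> Pcar"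
    then show "F p \<in> topspace Y"
      unfolding pre_carrier_def
      using V E C by (auto simp: continuous_map_def Pi_iff)
  qed
next
  fix W assume W: "openin Y W"
  let ?U = "{x \<in> Pcar. F x \<in> W}"
  have e: "openin (top_of_set {0..1}) {s \<in> {0..1}. Edge g l s \<in> ?U}" for g l
  proof (cases "g \<in> Verts \<and> l \<in> Gens")
    case True
    have "{s \<in> {0..1}. Edge g l s \<in> ?U} = {s \<in> topspace (top_of_set {0..1}). F (Edge g l s) \<in> W}"
      using True by (auto simp: pre_carrier_def)
    then show ?thesis using E[of g l] True W by (simp add: continuous_map_def)
  next
    case False
    then have "{s \<in> {0..1}. Edge g l s \<in> ?U} = {}" by (auto simp: pre_carrier_def)
    then show ?thesis by (metis openin_empty)
  qed
  have c: "openin (top_of_set (cball 0 1)) {z \<in> cball 0 1. Cell g c z \<in> ?U}" for g c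
  proof (cases "g \<in> Verts \<and> c \<in> cells A R")
    case True
    have "{z \<in> cball 0 1. Cell g c z \<in> ?U} = {z \<in> topspace (top_of_set (cball 0 1)). F (Cell g c z) \<in> W}"
      using True by (auto simp: pre_carrier_def)
    then show ?thesis using C[of g c] True W by (simp add: continuous_map_def)
  next
    case False
    then have "{z \<in> cball 0 1. Cell g c z \<in> ?U} = {}" by (auto simp: pre_carrier_def)
    then show ?thesis by (metis openin_empty)
  qed
  show "openin Ptop ?U" unfolding openin_pre pre_open_def using e c by auto
qed

section \<open>Squares in the conjugation cells\<close>

definition conj_square :: "'a gword set \<Rightarrow> 'a \<Rightarrow> real \<times> real \<Rightarrow> 'a xpt" where
  "conj_square g b p = cn (Cell g (ConjCell b) (square_disk (real (length (conjrel phi b))) p))"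

lemma length_conjrel: "length (conjrel phi b) = length (phi b) + 3"
  by (simp add: conjrel_def)

lemma canon_conj_cis: "cn (Cell g (ConjCell b) (cis t)) = bdry A R phi g (conjrel phi b) (cis t)"
  by (simp add: canon_def cellword_def)

context
  fixes g b assumes g: "g \<in> Verts" and b: "b \<in> A" and pb: "over A (phi b)"
begin

lemma conjrel_over_Gens: "over Gens (conjrel phi b)" using b pb by (rule conjrel_over)

lemma act_conjrel: "act g (conjrel phi b) = g" using g conjrel_in_Rels[OF b] by (rule act_relator)

lemma conj_square_bottom: "0 \<le> x \<Longrightarrow> x \<le> 1 \<Longrightarrow> conj_square g b (x, 0) = letter_pt g (L b, False) x"
proof -
  assume x: "0 \<le> x" "x \<le> 1"
  let ?w = "conjrel phi b"
  have "conj_square g b (x, 0) = bdry A R phi g ?w (cis (2 * pi * ((real 0 + x) / real (length ?w))))"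
    unfolding conj_square_def using x by (simp add: square_disk_bottom canon_conj_cis)
  also have "\<dots> = letter_pt (act g (take 0 ?w)) (?w ! 0) x"
    by (rule bdry_arc_closed[OF g conjrel_over_Gens act_conjrel]) (use x in \<open>auto simp: conjrel_def\<close>)
  finally show ?thesis using g by (simp add: act_Nil conjrel_def)
qed

lemma conj_square_right: "0 \<le> y \<Longrightarrow> y \<le> 1 \<Longrightarrow> conj_square g b (1, y) = canon_edge A R phi (act g [(L b, False)]) T y"
proof -
  assume y: "0 \<le> y" "y \<le> 1"
  let ?w = "conjrel phi b"
  have "conj_square g b (1, y) = bdry A R phi g ?w (cis (2 * pi * ((real 1 + y) / real (length ?w))))"
    unfolding conj_square_def using y by (simp add: square_disk_right canon_conj_cis)
  also have "\<dots> = letter_pt (act g (take 1 ?w)) (?w ! 1) y"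
    by (rule bdry_arc_closed[OF g conjrel_over_Gens act_conjrel]) (use y in \<open>auto simp: conjrel_def\<close>)
  finally show ?thesis by (simp add: conjrel_def letter_pt_def)
qed

lemma conj_square_left: "0 \<le> y \<Longrightarrow> y \<le> 1 \<Longrightarrow> conj_square g b (0, y) = canon_edge A R phi g T y"
proof -
  assume y: "0 \<le> y" "y \<le> 1"
  let ?w = "conjrel phi b"
  let ?m = "length ?w"
  have m: "?m = length (phi b) + 3" by (rule length_conjrel)
  have m0: "real ?m \<noteq> 0" using m by simp
  have c: "cis (2 * pi * (- y / real ?m)) = cis (2 * pi * ((real (?m - 1) + (1 - y)) / real ?m))"
  proof -
    have e: "2 * pi * ((real (?m - 1) + (1 - y)) / real ?m) = 2 * pi * (- y / real ?m) + 2 * pi"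
      using m by (simp add: field_simps)
    show ?thesis unfolding e by (rule cis_add_2pi[symmetric])
  qed
  have "conj_square g b (0, y) = bdry A R phi g ?w (cis (2 * pi * ((real (?m - 1) + (1 - y)) / real ?m)))"
    using m unfolding conj_square_def square_disk_left[OF y, of "real ?m", OF m0] canon_conj_cis c by simp
  also have "\<dots> = letter_pt (act g (take (?m - 1) ?w)) (?w ! (?m - 1)) (1 - y)"
    by (rule bdry_arc_closed[OF g conjrel_over_Gens act_conjrel]) (use y m in auto)
  also have "?w ! (?m - 1) = (T, True)" by (simp add: conjrel_def nth_append)
  also have "act (act g (take (?m - 1) ?w)) [(T, True)] = g"
  proof -
    have "take (?m - 1) ?w @ [(T, True)] = ?w" by (simp add: conjrel_def)
    then show ?thesis using g conjrel_over_Gens act_conjrel by (metis act_append over_take)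
  qed
  ultimately show ?thesis by (simp add: letter_pt_def)
qed

lemma conj_square_top: "0 \<le> x \<Longrightarrow> x \<le> 1 \<Longrightarrow> conj_square g b (x, 1) = path_pt (act g [(T, False)]) (liftw (phi b)) x"
proof -
  assume x: "0 \<le> x" "x \<le> 1"
  let ?W = "liftw (phi b)"
  let ?u = "act g [(T, False)]"
  have W: "over Gens ?W" using pb by (rule over_liftw)
  have u: "?u \<in> Verts" using g by (simp add: act_in_Verts)
  have "conj_square g b (x, 1) = bdry A R phi g (conjrel phi b)
      (cis (2 * pi * ((real (length [(L b, False), (T, False)]) + (1 - x) * real (length (inv_word ?W)))
        / real (length (conjrel phi b)))))"
    unfolding conj_square_def using x by (simp add: square_disk_top canon_conj_cis length_conjrel algebra_simps)
  also have "\<dots> = path_pt (act g [(L b, False), (T, False)]) (inv_word ?W) (1 - x)"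
    using x by (intro bdry_subword[OF g conjrel_over_Gens act_conjrel, of _ _ "[(T, True)]"])
      (auto simp: conjrel_def)
  also have "act g [(L b, False), (T, False)] = act ?u ?W"
    using act_conj[OF g b, of False] g by (simp add: phi_letter_def act_append)
  also have "path_pt (act ?u ?W) (inv_word ?W) (1 - x) = path_pt ?u ?W x"
    using path_pt_inv_word[OF u W, of "1 - x"] x by simp
  finally show ?thesis .
qed

lemma conj_square_interior: "0 < x \<Longrightarrow> x < 1 \<Longrightarrow> 0 < y \<Longrightarrow> y < 1 \<Longrightarrow>
   \<exists>z. cmod z < 1 \<and> conj_square g b (x, y) = Cell g (ConjCell b) z"
proof -
  assume "0 < x" "x < 1" "0 < y" "y < 1"
  then have "cmod (square_disk (real (length (conjrel phi b))) (x, y)) < 1" by (intro norm_square_disk_less) auto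
  then show ?thesis by (auto simp: conj_square_def canon_def)
qed

lemma continuous_map_conj_square: "continuous_map (top_of_set unit_sq) Cay (conj_square g b)"
proof -
  let ?m = "real (length (conjrel phi b))"
  have m: "?m \<noteq> 0" by (simp add: conjrel_def)
  have "continuous_map (top_of_set unit_sq) (top_of_set (cball 0 1)) (square_disk ?m)"
    using continuous_on_square_disk[OF m] norm_square_disk_le by (auto simp: continuous_map_in_subtopology)
  then have "continuous_map (top_of_set unit_sq) Ptop (\<lambda>p. Cell g (ConjCell b) (square_disk ?m p))"
    using g b by (intro continuous_map_into_cell) (auto simp: cells_def)
  then show ?thesis unfolding conj_square_def[abs_def]
    using continuous_map_canon by (rule continuous_map_compose[unfolded o_def])
qed

end

(* The square of an inverse letter b^-1 at g is the conjugation square of b at g b^-1, reflected;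
   the value for the letter t is irrelevant. *)
definition letter_square :: "'a gword set \<Rightarrow> 'a gen \<times> bool \<Rightarrow> real \<times> real \<Rightarrow> 'a xpt" where
  "letter_square g c p = (case fst c of L b \<Rightarrow> (if snd c then conj_square (act g [c]) b (1 - fst p, snd p) else conj_square g b p) | T \<Rightarrow> Vert g)"

lemma A_letterE: "A_letter A c \<Longrightarrow> (\<And>b e. c = (L b, e) \<Longrightarrow> b \<in> A \<Longrightarrow> P) \<Longrightarrow> P"
  by (cases c) (auto simp: A_letter_def)

lemma A_letter_Gens: "A_letter A c \<Longrightarrow> fst c \<in> Gens"
  by (auto simp: A_letter_def)

lemma phi_letter_over_Gens: "A_letter A c \<Longrightarrow> over Gens (phi_letter c)"
  by (cases c) (auto simp: A_letter_def intro!: phi_letter_over phi_over[rule_format])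

lemma A_letter_phi_letter_nth: "A_letter A c \<Longrightarrow> j < length (phi_letter c) \<Longrightarrow> A_letter A (phi_letter c ! j)"
proof -
  assume c: "A_letter A c" and j: "j < length (phi_letter c)"
  obtain b e where be: "c = (L b, e)" "b \<in> A" using c by (rule A_letterE)
  have o: "over A (phi b)" using phi_over be by auto
  have "\<forall>x \<in> set (phi_letter c). \<exists>b'\<in>A. fst x = L b'"
    using o unfolding be phi_letter_def
    by (auto simp: over_def liftw_def inv_word_def flip_letter_def)
  then show ?thesis using j by (auto simp: A_letter_def)
qed

lemma act_inverse_letter: "g \<in> Verts \<Longrightarrow> fst c \<in> Gens \<Longrightarrow> snd c \<Longrightarrow> act (act g [c]) [(fst c, False)] = g"
proof -
  assume g: "g \<in> Verts" and l: "fst c \<in> Gens" and e: "snd c"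
  have "act (act g [c]) [(fst c, False)] = act g ([] @ [(fst c, True), (fst c, \<not> True)] @ [])"
    using g l e by (cases c) (simp add: act_append)
  also have "\<dots> = g" using act_cancel[OF g, of "[]" "fst c" True "[]"] act_Nil[OF g] by simp
  finally show ?thesis .
qed

context
  fixes g c assumes g: "g \<in> Verts" and c: "A_letter A c"
begin

lemma letter_square_bottom: "0 \<le> x \<Longrightarrow> x \<le> 1 \<Longrightarrow> letter_square g c (x, 0) = letter_pt g c x"
proof -
  assume x: "0 \<le> x" "x \<le> 1"
  obtain b e where be: "c = (L b, e)" "b \<in> A" using c by (rule A_letterE)
  have o: "over A (phi b)" using phi_over be by auto
  show ?thesis
  proof (cases e)
    case False then show ?thesis using x be conj_square_bottom[OF g be(2) o] by (simp add: letter_square_def)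
  next
    case True
    have h: "act g [c] \<in> Verts" using g be by (simp add: act_in_Verts)
    have "letter_square g c (x, 0) = letter_pt (act g [c]) (L b, False) (1 - x)"
      using x be True conj_square_bottom[OF h be(2) o] by (simp add: letter_square_def)
    also have "\<dots> = letter_pt (act (act g [c]) [(L b, False)]) (L b, True) (1 - (1 - x))"
      using letter_pt_flip[OF h, of "(L b, False)"] be by (simp add: flip_letter_def)
    also have "act (act g [c]) [(L b, False)] = g" using act_inverse_letter[OF g, of c] be True by simp
    finally show ?thesis using be True by simp
  qed
qed

lemma letter_square_left: "0 \<le> y \<Longrightarrow> y \<le> 1 \<Longrightarrow> letter_square g c (0, y) = canon_edge A R phi g T y"
proof -
  assume y: "0 \<le> y" "y \<le> 1"
  obtain b e where be: "c = (L b, e)" "b \<in> A" using c by (rule A_letterE)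
  have o: "over A (phi b)" using phi_over be by auto
  show ?thesis
  proof (cases e)
    case False then show ?thesis using y be conj_square_left[OF g be(2) o] by (simp add: letter_square_def)
  next
    case True
    have h: "act g [c] \<in> Verts" using g be by (simp add: act_in_Verts)
    have "letter_square g c (0, y) = canon_edge A R phi (act (act g [c]) [(L b, False)]) T y"
      using y be True conj_square_right[OF h be(2) o] by (simp add: letter_square_def)
    also have "act (act g [c]) [(L b, False)] = g" using act_inverse_letter[OF g, of c] be True by simp
    finally show ?thesis .
  qed
qed

lemma letter_square_right: "0 \<le> y \<Longrightarrow> y \<le> 1 \<Longrightarrow> letter_square g c (1, y) = canon_edge A R phi (act g [c]) T y"
proof -
  assume y: "0 \<le> y" "y \<le> 1"
  obtain b e where be: "c = (L b, e)" "b \<in> A" using c by (rule A_letterE)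
  have o: "over A (phi b)" using phi_over be by auto
  show ?thesis
  proof (cases e)
    case False then show ?thesis using y be conj_square_right[OF g be(2) o] by (simp add: letter_square_def)
  next
    case True
    have h: "act g [c] \<in> Verts" using g be by (simp add: act_in_Verts)
    show ?thesis using y be True conj_square_left[OF h be(2) o] by (simp add: letter_square_def)
  qed
qed

lemma letter_square_top: "0 \<le> x \<Longrightarrow> x \<le> 1 \<Longrightarrow> letter_square g c (x, 1) = path_pt (act g [(T, False)]) (phi_letter c) x"
proof -
  assume x: "0 \<le> x" "x \<le> 1"
  obtain b e where be: "c = (L b, e)" "b \<in> A" using c by (rule A_letterE)
  have o: "over A (phi b)" using phi_over be by auto
  show ?thesis
  proof (cases e)
    case False then show ?thesis using x be conj_square_top[OF g be(2) o] by (simp add: letter_square_def phi_letter_def)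
  next
    case True
    let ?h = "act g [c]"
    let ?W = "liftw (phi b)"
    have h: "?h \<in> Verts" using g be by (simp add: act_in_Verts)
    have u: "act ?h [(T, False)] \<in> Verts" using h by (simp add: act_in_Verts)
    have Wo: "over Gens ?W" using o by (rule over_liftw)
    have "letter_square g c (x, 1) = path_pt (act ?h [(T, False)]) ?W (1 - x)"
      using x be True conj_square_top[OF h be(2) o] by (simp add: letter_square_def)
    also have "\<dots> = path_pt (act (act ?h [(T, False)]) ?W) (inv_word ?W) x"
      by (rule path_pt_inv_word[OF u Wo x])
    also have "act (act ?h [(T, False)]) ?W = act g [(T, False)]"
    proof -
      have "act (act ?h [(T, False)]) ?W = act ?h ((T, False) # phi_letter (L b, False))"
        using h by (simp add: act_append phi_letter_def)
      also have "\<dots> = act ?h [(L b, False), (T, False)]" using act_conj[OF h be(2)] by simp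
      also have "\<dots> = act (act ?h [(L b, False)]) [(T, False)]" using h be by (simp add: act_append)
      also have "act ?h [(L b, False)] = g" using act_inverse_letter[OF g, of c] be True by simp
      finally show ?thesis .
    qed
    finally show ?thesis using be True by (simp add: phi_letter_def)
  qed
qed

lemma letter_square_interior: "0 < x \<Longrightarrow> x < 1 \<Longrightarrow> 0 < y \<Longrightarrow> y < 1 \<Longrightarrow>
   \<exists>h b z. h \<in> Verts \<and> lev h = lev g \<and> b \<in> A \<and> cmod z < 1 \<and> letter_square g c (x, y) = Cell h (ConjCell b) z"
proof -
  assume xy: "0 < x" "x < 1" "0 < y" "y < 1"
  obtain b e where be: "c = (L b, e)" "b \<in> A" using c by (rule A_letterE)
  have o: "over A (phi b)" using phi_over be by auto
  show ?thesis
  proof (cases e)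
    case False then show ?thesis using xy be conj_square_interior[OF g be(2) o] g by (simp add: letter_square_def) blast
  next
    case True
    have h: "act g [c] \<in> Verts" using g be by (simp add: act_in_Verts)
    have l: "lev (act g [c]) = lev g" using g be by (simp add: lev_act)
    show ?thesis using xy be True conj_square_interior[OF h be(2) o, of "1 - x" y] h l by (simp add: letter_square_def) blast
  qed
qed

lemma continuous_map_letter_square: "continuous_map (top_of_set unit_sq) Cay (letter_square g c)"
proof -
  obtain b e where be: "c = (L b, e)" "b \<in> A" using c by (rule A_letterE)
  have o: "over A (phi b)" using phi_over be by auto
  show ?thesis
  proof (cases e)
    case False
    have "continuous_map (top_of_set unit_sq) Cay (conj_square g b)" by (rule continuous_map_conj_square[OF g be(2) o])
    then show ?thesis by (rule continuous_map_eq) (simp add: letter_square_def be False)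
  next
    case True
    have h: "act g [c] \<in> Verts" using g be by (simp add: act_in_Verts)
    have f: "continuous_map (top_of_set unit_sq) (top_of_set unit_sq) (\<lambda>p. (1 - fst p, snd p))"
      by (auto simp: continuous_map_in_subtopology intro!: continuous_intros)
    have "continuous_map (top_of_set unit_sq) Cay (\<lambda>p. conj_square (act g [c]) b (1 - fst p, snd p))"
      using continuous_map_compose[OF f continuous_map_conj_square[OF h be(2) o]] by (simp add: o_def)
    then show ?thesis by (rule continuous_map_eq) (simp add: letter_square_def be True)
  qed
qed

end

section \<open>The homotopy\<close>

lemma tray_first: "g \<in> Verts \<Longrightarrow> 0 \<le> y \<Longrightarrow> y \<le> 1 \<Longrightarrow> tray A R phi g y = canon_edge A R phi g T y"
proof -
  assume g: "g \<in> Verts" and y: "0 \<le> y" "y \<le> 1"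
  show ?thesis
  proof (cases "y = 1")
    case True then show ?thesis using g by (simp add: tray_def canon_def canon_edge_def gstep_act)
  next
    case False
    then have "\<lfloor>y\<rfloor> = 0" using y by (simp add: floor_eq_iff)
    then show ?thesis using g by (simp add: tray_def canon_def act_Nil)
  qed
qed

lemma tray_shift: "g \<in> Verts \<Longrightarrow> 1 \<le> y \<Longrightarrow> tray A R phi g y = tray A R phi (act g [(T, False)]) (y - 1)"
proof -
  assume g: "g \<in> Verts" and y: "1 \<le> y"
  have f: "\<lfloor>y - 1\<rfloor> = \<lfloor>y\<rfloor> - 1" by simp
  have fl1: "\<lfloor>y\<rfloor> \<ge> 1" using y by (simp add: le_floor_iff)
  have k: "nat \<lfloor>y\<rfloor> = Suc (nat \<lfloor>y - 1\<rfloor>)" unfolding f using fl1 by arith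
  have "act g (replicate (nat \<lfloor>y\<rfloor>) (T, False)) = act (act g [(T, False)]) (replicate (nat \<lfloor>y - 1\<rfloor>) (T, False))"
    unfolding k using g by (simp add: act_append)
  moreover have "y - of_int \<lfloor>y\<rfloor> = (y - 1) - of_int \<lfloor>y - 1\<rfloor>" using f by simp
  ultimately show ?thesis unfolding tray_def by simp
qed

lemma tray_0: "g \<in> Verts \<Longrightarrow> tray A R phi g 0 = Vert g"
  by (simp add: tray_def canon_def canon_edge_def act_Nil)

lemma tray_segment: "g \<in> Verts \<Longrightarrow> real k \<le> y \<Longrightarrow> y \<le> real k + 1 \<Longrightarrow>
   tray A R phi g y = cn (Edge (act g (replicate k (T, False))) T (y - real k))"
proof (induction k arbitrary: g y)
  case 0 then show ?case by (simp add: tray_first canon_def act_Nil)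
next
  case (Suc k)
  have g1: "act g [(T, False)] \<in> Verts" using Suc.prems by (simp add: act_in_Verts)
  have "tray A R phi g y = tray A R phi (act g [(T, False)]) (y - 1)"
    using Suc.prems by (intro tray_shift) auto
  also have "\<dots> = cn (Edge (act (act g [(T, False)]) (replicate k (T, False))) T (y - 1 - real k))"
    using Suc.prems by (intro Suc.IH[OF g1]) auto
  also have "act (act g [(T, False)]) (replicate k (T, False)) = act g (replicate (Suc k) (T, False))"
    using Suc.prems by (simp add: act_append replicate_app_Cons_same[symmetric])
  finally show ?case by (simp add: algebra_simps)
qed

lemma continuous_map_tray: "g \<in> Verts \<Longrightarrow> continuous_map (top_of_set {0..real K}) Cay (tray A R phi g)"
proof -
  assume g: "g \<in> Verts"
  let ?T = "\<lambda>k::nat. {real k .. real k + 1} \<inter> {0..real K}"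
  let ?f = "\<lambda>k y. cn (Edge (act g (replicate k (T, False))) T (y - real k))"
  show ?thesis
  proof (rule pasting_lemma_closed[where I = "{..K}" and T = ?T and f = ?f])
    show "finite {..K}" by simp
    fix k assume k: "k \<in> {..K}"
    show "closedin (top_of_set {0..real K}) (?T k)"
      by (rule closed_subset) auto
    have gk: "act g (replicate k (T, False)) \<in> Verts" using g by (intro act_in_Verts) (auto simp: over_def)
    have "continuous_map (top_of_set (?T k)) (top_of_set {0..1}) (\<lambda>y. y - real k)"
      by (auto simp: continuous_map_in_subtopology intro!: continuous_intros)
    then have "continuous_map (top_of_set (?T k)) Ptop (\<lambda>y. Edge (act g (replicate k (T, False))) T (y - real k))"
      using gk by (intro continuous_map_into_edge) auto
    then have "continuous_map (top_of_set (?T k)) Cay (?f k)"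
      using continuous_map_canon by (rule continuous_map_compose[unfolded o_def])
    then show "continuous_map (subtopology (top_of_set {0..real K}) (?T k)) Cay (?f k)"
      by (simp add: subtopology_subtopology Int_commute)
  next
    fix i j y assume "i \<in> {..K}" "j \<in> {..K}" "y \<in> topspace (top_of_set {0..real K}) \<inter> ?T i \<inter> ?T j"
    then show "?f i y = ?f j y" using tray_segment[OF g, of i y] tray_segment[OF g, of j y] by auto
  next
    fix y assume y: "y \<in> topspace (top_of_set {0..real K})"
    define k where "k = min (nat \<lfloor>y\<rfloor>) K"
    have "real k \<le> y" "y \<le> real k + 1"
      using y by (auto simp: k_def min_def of_nat_nat) linarith+
    then show "\<exists>j. j \<in> {..K} \<and> y \<in> ?T j \<and> tray A R phi g y = ?f j y"
      using y tray_segment[OF g, of k y] by (intro exI[of _ k]) (auto simp: k_def)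
  qed
qed

(* strip n g c is the homotopy for the edge read by c at g on [0,1] x [0, n+1]. If phi(c) is
   empty, everything above height 1 collapses onto the t-ray. *)
fun strip :: "nat \<Rightarrow> 'a gword set \<Rightarrow> 'a gen \<times> bool \<Rightarrow> real \<Rightarrow> real \<Rightarrow> 'a xpt" where
  "strip 0 g c x y = letter_square g c (x, y)"
| "strip (Suc n) g c x y = (if y \<le> 1 then letter_square g c (x, y) else
     (if phi_letter c = [] then tray A R phi (act g [(T, False)]) (y - 1) else
       strip n (act (act g [(T, False)]) (take (seg_index (phi_letter c) x) (phi_letter c))) (phi_letter c ! seg_index (phi_letter c) x)
          (x * real (length (phi_letter c)) - real (seg_index (phi_letter c) x)) (y - 1)))"

lemma act_prefix_in_Verts: "g \<in> Verts \<Longrightarrow> A_letter A c \<Longrightarrow> act (act g [(T, False)]) (take j (phi_letter c)) \<in> Verts"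
  by (intro act_in_Verts) (auto intro: over_take phi_letter_over_Gens)

lemma act_T_phi_letter: "g \<in> Verts \<Longrightarrow> A_letter A c \<Longrightarrow> act (act g [(T, False)]) (phi_letter c) = act (act g [c]) [(T, False)]"
proof -
  assume g: "g \<in> Verts" and c: "A_letter A c"
  obtain b e where be: "c = (L b, e)" "b \<in> A" using c by (rule A_letterE)
  have "act (act g [(T, False)]) (phi_letter c) = act g ((T, False) # phi_letter c)" using g by (simp add: act_append)
  also have "\<dots> = act g [c, (T, False)]" using act_conj[OF g be(2), of e] be by simp
  also have "\<dots> = act (act g [c]) [(T, False)]" using g be by (simp add: act_append)
  finally show ?thesis .
qed

lemma strip_bottom: "g \<in> Verts \<Longrightarrow> A_letter A c \<Longrightarrow> 0 \<le> x \<Longrightarrow> x \<le> 1 \<Longrightarrow> strip n g c x 0 = letter_pt g c x"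
  by (cases n) (simp_all add: letter_square_bottom)

lemma strip_left: "g \<in> Verts \<Longrightarrow> A_letter A c \<Longrightarrow> 0 \<le> y \<Longrightarrow> y \<le> real n + 1 \<Longrightarrow> strip n g c 0 y = tray A R phi g y"
proof (induction n arbitrary: g c y)
  case 0 then show ?case by (simp add: letter_square_left tray_first)
next
  case (Suc n)
  note g = Suc.prems(1) and c = Suc.prems(2)
  show ?case
  proof (cases "y \<le> 1")
    case True then show ?thesis using Suc.prems by (simp add: letter_square_left tray_first)
  next
    case False
    let ?u = "act g [(T, False)]"
    let ?W = "phi_letter c"
    have u: "?u \<in> Verts" using g by (simp add: act_in_Verts)
    have sh: "tray A R phi g y = tray A R phi ?u (y - 1)" using g False by (intro tray_shift) auto
    show ?thesis
    proof (cases "?W = []")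
      case True then show ?thesis using False sh by simp
    next
      case Wne: False
      have c0: "A_letter A (?W ! 0)" using c Wne by (intro A_letter_phi_letter_nth) auto
      have "strip (Suc n) g c 0 y = strip n ?u (?W ! 0) 0 (y - 1)"
        using False Wne u by (simp add: seg_index_0 act_Nil)
      also have "\<dots> = tray A R phi ?u (y - 1)"
        using Suc.prems False by (intro Suc.IH[OF u c0]) auto
      finally show ?thesis using sh by simp
    qed
  qed
qed

lemma strip_right: "g \<in> Verts \<Longrightarrow> A_letter A c \<Longrightarrow> 0 \<le> y \<Longrightarrow> y \<le> real n + 1 \<Longrightarrow> strip n g c 1 y = tray A R phi (act g [c]) y"
proof (induction n arbitrary: g c y)
  case 0 then show ?case by (simp add: letter_square_right tray_first act_in_Verts A_letter_Gens)
next
  case (Suc n)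
  note g = Suc.prems(1) and c = Suc.prems(2)
  have gc: "act g [c] \<in> Verts" using g c by (simp add: act_in_Verts A_letter_Gens)
  show ?case
  proof (cases "y \<le> 1")
    case True then show ?thesis using Suc.prems gc by (simp add: letter_square_right tray_first)
  next
    case False
    let ?u = "act g [(T, False)]"
    let ?W = "phi_letter c"
    let ?N = "length ?W"
    have u: "?u \<in> Verts" using g by (simp add: act_in_Verts)
    have sh: "tray A R phi (act g [c]) y = tray A R phi (act ?u ?W) (y - 1)"
      using gc False act_T_phi_letter[OF g c] by (simp add: tray_shift)
    show ?thesis
    proof (cases "?W = []")
      case True then show ?thesis using False sh u by (simp add: act_Nil)
    next
      case Wne: False
      have cN: "A_letter A (?W ! (?N - 1))" using c Wne by (intro A_letter_phi_letter_nth) auto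
      have gN: "act ?u (take (?N - 1) ?W) \<in> Verts" using act_prefix_in_Verts[OF g c] .
      have "strip (Suc n) g c 1 y = strip n (act ?u (take (?N - 1) ?W)) (?W ! (?N - 1)) 1 (y - 1)"
        using False Wne by (simp add: seg_index_1 of_nat_diff Suc_le_eq)
      also have "\<dots> = tray A R phi (act (act ?u (take (?N - 1) ?W)) [?W ! (?N - 1)]) (y - 1)"
        using Suc.prems False by (intro Suc.IH[OF gN cN]) auto
      also have "act (act ?u (take (?N - 1) ?W)) [?W ! (?N - 1)] = act ?u ?W"
      proof -
        have "take (?N - 1) ?W @ [?W ! (?N - 1)] = ?W" using Wne
          by (metis append_butlast_last_id butlast_conv_take last_conv_nth)
        then show ?thesis using u phi_letter_over_Gens[OF c] by (metis act_append over_take)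
      qed
      finally show ?thesis using sh by simp
    qed
  qed
qed

lemma strip_Suc_stable: "y \<le> real n + 1 \<Longrightarrow> strip (Suc n) g c x y = strip n g c x y"
proof (induction n arbitrary: g c x y)
  case 0 then show ?case by simp
next
  case (Suc n)
  show ?case
  proof (cases "y \<le> 1")
    case True then show ?thesis by simp
  next
    case False
    let ?W = "phi_letter c"
    let ?G = "act (act g [(T, False)]) (take (seg_index ?W x) ?W)"
    let ?C = "?W ! seg_index ?W x"
    let ?S = "x * real (length ?W) - real (seg_index ?W x)"
    have L: "strip (Suc (Suc n)) g c x y = (if ?W = [] then tray A R phi (act g [(T, False)]) (y - 1) else strip (Suc n) ?G ?C ?S (y - 1))"
      by (subst strip.simps(2)) (simp only: False if_False)
    have R: "strip (Suc n) g c x y = (if ?W = [] then tray A R phi (act g [(T, False)]) (y - 1) else strip n ?G ?C ?S (y - 1))"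
      by (subst strip.simps(2)) (simp only: False if_False)
    have "strip (Suc n) ?G ?C ?S (y - 1) = strip n ?G ?C ?S (y - 1)" using Suc.prems by (intro Suc.IH) simp
    then show ?thesis unfolding L R by simp
  qed
qed

lemma strip_stable: "y \<le> real n + 1 \<Longrightarrow> n \<le> m \<Longrightarrow> strip m g c x y = strip n g c x y"
proof (induction m)
  case 0 then show ?case by simp
next
  case (Suc m)
  show ?case
  proof (cases "n = Suc m")
    case True then show ?thesis by simp
  next
    case False
    then have "n \<le> m" using Suc.prems by simp
    then show ?thesis using Suc strip_Suc_stable[of y m] by simp
  qed
qed

lemma strip_columns_agree:
  assumes g: "g \<in> Verts" and c: "A_letter A c" and j: "Suc j < length (phi_letter c)"
    and y: "0 \<le> y" "y \<le> real n + 1"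
  shows "strip n (act (act g [(T, False)]) (take (Suc j) (phi_letter c))) (phi_letter c ! Suc j) 0 y
       = strip n (act (act g [(T, False)]) (take j (phi_letter c))) (phi_letter c ! j) 1 y"
proof -
  let ?u = "act g [(T, False)]"
  let ?W = "phi_letter c"
  have seam: "act ?u (take (Suc j) ?W) = act (act ?u (take j ?W)) [?W ! j]"
    using g phi_letter_over_Gens[OF c] j by (simp add: act_append act_in_Verts over_take take_Suc_conv_app_nth)
  have "strip n (act ?u (take (Suc j) ?W)) (?W ! Suc j) 0 y = tray A R phi (act ?u (take (Suc j) ?W)) y"
    using y by (intro strip_left act_prefix_in_Verts[OF g c] A_letter_phi_letter_nth[OF c j])
  also have "\<dots> = strip n (act ?u (take j ?W)) (?W ! j) 1 y"
    unfolding seam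
    using j y by (intro strip_right[symmetric] act_prefix_in_Verts[OF g c] A_letter_phi_letter_nth[OF c]) auto
  finally show ?thesis .
qed

lemma strip_column:
  assumes g: "g \<in> Verts" and c: "A_letter A c" and Wne: "phi_letter c \<noteq> []" and j: "j < length (phi_letter c)"
    and xj: "real j \<le> x * real (length (phi_letter c))" "x * real (length (phi_letter c)) \<le> real j + 1"
    and y: "1 \<le> y" "y \<le> real n + 2"
  shows "strip (Suc n) g c x y = strip n (act (act g [(T, False)]) (take j (phi_letter c))) (phi_letter c ! j)
          (x * real (length (phi_letter c)) - real j) (y - 1)"
proof -
  let ?u = "act g [(T, False)]"
  let ?W = "phi_letter c"
  let ?N = "length ?W"
  show ?thesis
  proof (cases "y = 1")
    case True
    have "0 \<le> x * real ?N" "x * real ?N \<le> 1 * real ?N" using xj j by linarith+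
    then have x01: "0 \<le> x" "x \<le> 1" using Wne by (simp_all add: zero_le_mult_iff mult_le_cancel_right1)
    have "strip (Suc n) g c x y = path_pt ?u ?W x" using True g c x01 by (simp add: letter_square_top)
    also have "\<dots> = letter_pt (act ?u (take j ?W)) (?W ! j) (x * real ?N - real j)"
      using g phi_letter_over_Gens[OF c] j xj by (intro path_pt_segment) (simp_all add: act_in_Verts)
    also have "\<dots> = strip n (act ?u (take j ?W)) (?W ! j) (x * real ?N - real j) (y - 1)"
      using True xj by (simp add: strip_bottom act_prefix_in_Verts[OF g c] A_letter_phi_letter_nth[OF c j])
    finally show ?thesis .
  next
    case False
    then have e: "strip (Suc n) g c x y = strip n (act ?u (take (seg_index ?W x) ?W)) (?W ! seg_index ?W x)
        (x * real ?N - real (seg_index ?W x)) (y - 1)"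
      using y Wne by simp
    show ?thesis
    proof (cases "seg_index ?W x = j")
      case True then show ?thesis using e by simp
    next
      case False
      then have o: "seg_index ?W x = Suc j" "x * real ?N = real j + 1" using seg_index_other[OF j xj] by auto
      moreover have "Suc j < ?N" using seg_index_less[OF Wne, of x] o by simp
      ultimately show ?thesis using e strip_columns_agree[OF g c, of j "y - 1" n] y \<open>y \<noteq> 1\<close> by simp
    qed
  qed
qed

lemma continuous_map_strip_upper:
  assumes g: "g \<in> Verts" and c: "A_letter A c"
    and IH: "\<And>h d. h \<in> Verts \<Longrightarrow> A_letter A d \<Longrightarrow>
      continuous_map (top_of_set ({0..1} \<times> {0..real n + 1})) Cay (\<lambda>p. strip n h d (fst p) (snd p))"
  shows "continuous_map (top_of_set ({0..1} \<times> {1..real n + 2})) Cay (\<lambda>p. strip (Suc n) g c (fst p) (snd p))"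
proof -
  let ?D = "{0..1::real} \<times> {1..real n + 2}"
  let ?u = "act g [(T, False)]"
  let ?W = "phi_letter c"
  let ?N = "length ?W"
  have u: "?u \<in> Verts" using g by (simp add: act_in_Verts)
  show ?thesis
  proof (cases "?W = []")
    case True
    have "continuous_map (top_of_set ?D) (top_of_set {0..real (Suc n)}) (\<lambda>p. snd p - 1)"
      by (auto simp: continuous_map_in_subtopology intro!: continuous_intros)
    from continuous_map_compose[OF this continuous_map_tray[OF u]]
    have "continuous_map (top_of_set ?D) Cay (\<lambda>p. tray A R phi ?u (snd p - 1))" by (simp add: o_def)
    moreover have "tray A R phi ?u (snd p - 1) = strip (Suc n) g c (fst p) (snd p)" if "p \<in> ?D" for p
      using that True g c u by (cases "snd p = 1") (auto simp: letter_square_top path_pt_def tray_0)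
    ultimately show ?thesis by (rule continuous_map_eq) simp
  next
    case Wne: False
    let ?T = "\<lambda>j. {p. real j \<le> fst p * real ?N \<and> fst p * real ?N \<le> real j + 1}"
    let ?f = "\<lambda>j p. strip n (act ?u (take j ?W)) (?W ! j) (fst p * real ?N - real j) (snd p - 1)"
    show ?thesis
    proof (rule pasting_closed_cover[where I = "{..<?N}" and TT = ?T and f = ?f])
      fix j assume "j \<in> {..<?N}"
      then have j: "j < ?N" by simp
      show "closed (?T j)" by (auto intro!: closed_Collect_conj closed_Collect_le continuous_intros)
      have "continuous_map (top_of_set (?D \<inter> ?T j)) (top_of_set ({0..1} \<times> {0..real n + 1}))
              (\<lambda>p. (fst p * real ?N - real j, snd p - 1))"
        by (auto simp: continuous_map_in_subtopology intro!: continuous_intros)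
      from continuous_map_compose[OF this IH[OF act_prefix_in_Verts[OF g c] A_letter_phi_letter_nth[OF c j]]]
      show "continuous_map (top_of_set (?D \<inter> ?T j)) Cay (?f j)" by (simp add: o_def)
      show "strip (Suc n) g c (fst p) (snd p) = ?f j p" if "p \<in> ?D \<inter> ?T j" for p
        using strip_column[OF g c Wne j, of "fst p" "snd p" n] that by auto
    next
      fix p assume "p \<in> ?D"
      then show "\<exists>j\<in>{..<?N}. p \<in> ?T j"
        using seg_index_bounds[OF Wne, of "fst p"] by (intro bexI[of _ "seg_index ?W (fst p)"]) auto
    qed simp
  qed
qed

lemma continuous_map_strip:
  "g \<in> Verts \<Longrightarrow> A_letter A c \<Longrightarrow>
   continuous_map (top_of_set ({0..1} \<times> {0..real n + 1})) Cay (\<lambda>p. strip n g c (fst p) (snd p))"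
proof (induction n arbitrary: g c)
  case 0
  have "{0..1::real} \<times> {0..real 0 + 1} = unit_sq" by simp
  then show ?case using continuous_map_letter_square[OF 0] by (auto elim: continuous_map_eq)
next
  case (Suc n)
  let ?D = "{0..1::real} \<times> {0..real (Suc n) + 1}"
  have lower: "continuous_map (subtopology (top_of_set ?D) {p \<in> topspace (top_of_set ?D). snd p \<le> 1}) Cay
      (letter_square g c)"
    unfolding subtopology_subtopology
    by (rule continuous_map_from_subtopology_mono[OF continuous_map_letter_square[OF Suc.prems]]) auto
  have upper: "continuous_map (subtopology (top_of_set ?D) {p \<in> topspace (top_of_set ?D). 1 \<le> snd p}) Cay
      (\<lambda>p. strip (Suc n) g c (fst p) (snd p))"
    unfolding subtopology_subtopology
    by (rule continuous_map_from_subtopology_mono[OF continuous_map_strip_upper[OF Suc.prems Suc.IH]])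
      (auto simp: algebra_simps)
  have "continuous_map (top_of_set ?D) euclideanreal snd"
    and "continuous_map (top_of_set ?D) euclideanreal (\<lambda>p. 1)"
    by (auto simp: continuous_map_iff_continuous intro!: continuous_intros)
  from continuous_map_cases_le[OF this lower upper]
  have "continuous_map (top_of_set ?D) Cay
      (\<lambda>p. if snd p \<le> 1 then letter_square g c p else strip (Suc n) g c (fst p) (snd p))"
    by auto
  then show ?case by (rule continuous_map_eq) simp
qed

definition homotopy :: "'a gword set \<Rightarrow> 'a gen \<times> bool \<Rightarrow> real \<times> real \<Rightarrow> 'a xpt" where
  "homotopy g c p = strip (nat \<lceil>snd p\<rceil>) g c (fst p) (snd p)"

lemma homotopy_strip: "0 \<le> snd p \<Longrightarrow> snd p \<le> real n + 1 \<Longrightarrow> homotopy g c p = strip n g c (fst p) (snd p)"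
proof -
  assume y: "0 \<le> snd p" "snd p \<le> real n + 1"
  let ?m = "nat \<lceil>snd p\<rceil>"
  have m: "snd p \<le> real ?m" using y by linarith
  show ?thesis
  proof (cases "?m \<le> n")
    case True then show ?thesis using strip_stable[of "snd p" ?m n] m by (simp add: homotopy_def)
  next
    case False
    from False have "n < ?m" by (simp only: not_le)
    then have nm: "n \<le> ?m" by simp
    show ?thesis using strip_stable[OF y(2) nm] by (simp add: homotopy_def)
  qed
qed

lemma continuous_map_homotopy: "g \<in> Verts \<Longrightarrow> A_letter A c \<Longrightarrow> continuous_map (top_of_set ({0..1} \<times> {0..})) Cay (homotopy g c)"
proof -
  assume g: "g \<in> Verts" and c: "A_letter A c"
  let ?S = "{0..1::real} \<times> {0::real..}"
  let ?T = "\<lambda>n::nat. ?S \<inter> {p. snd p < real n + 1}"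
  let ?f = "\<lambda>n p. strip n g c (fst p) (snd p)"
  show ?thesis
  proof (rule pasting_lemma[where I = UNIV and T = ?T and f = ?f])
    fix n :: nat
    show "openin (top_of_set ?S) (?T n)"
      by (rule openin_open_Int) (auto intro!: open_Collect_less continuous_intros)
    have "continuous_map (top_of_set ({0..1} \<times> {0..real n + 1})) Cay (?f n)" by (rule continuous_map_strip[OF g c])
    then have "continuous_map (top_of_set (?T n)) Cay (?f n)"
      by (rule continuous_map_from_subtopology_mono) auto
    then show "continuous_map (subtopology (top_of_set ?S) (?T n)) Cay (?f n)"
      by (simp add: subtopology_subtopology Int_absorb1)
  next
    fix i j p assume "i \<in> (UNIV :: nat set)" "j \<in> (UNIV :: nat set)" "p \<in> topspace (top_of_set ?S) \<inter> ?T i \<inter> ?T j"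
    then show "?f i p = ?f j p" using homotopy_strip[of p i g c] homotopy_strip[of p j g c] by auto
  next
    fix p assume p: "p \<in> topspace (top_of_set ?S)"
    have "snd p < real (nat \<lceil>snd p\<rceil>) + 1" using p by auto linarith
    then show "\<exists>j. j \<in> UNIV \<and> p \<in> ?T j \<and> homotopy g c p = ?f j p"
      using p by (intro exI[of _ "nat \<lceil>snd p\<rceil>"]) (simp add: homotopy_def)
  qed
qed

lemma homotopy_bottom:
  "g \<in> Verts \<Longrightarrow> A_letter A c \<Longrightarrow> 0 \<le> x \<Longrightarrow> x \<le> 1 \<Longrightarrow> homotopy g c (x, 0) = letter_pt g c x"
  by (simp add: homotopy_def letter_square_bottom)

lemma homotopy_left:
  assumes "g \<in> Verts" "A_letter A c" "0 \<le> y"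
  shows "homotopy g c (0, y) = tray A R phi g y"
  using strip_left[OF assms, of "nat \<lceil>y\<rceil>"] by (simp add: homotopy_def) linarith

lemma homotopy_right:
  assumes "g \<in> Verts" "A_letter A c" "0 \<le> y"
  shows "homotopy g c (1, y) = tray A R phi (act g [c]) y"
  using strip_right[OF assms, of "nat \<lceil>y\<rceil>"] by (simp add: homotopy_def) linarith

section \<open>Hausdorffness of the Cayley complex\<close>

definition graph_val :: "('a gword set \<Rightarrow> real) \<Rightarrow> ('a gword set \<Rightarrow> 'a gen \<Rightarrow> real \<Rightarrow> real) \<Rightarrow> 'a xpt \<Rightarrow> real" where
  "graph_val V E q = (case q of Vert g \<Rightarrow> V g | Edge g l s \<Rightarrow> E g l s | Cell _ _ _ \<Rightarrow> 0)"

definition edge_data :: "('a gword set \<Rightarrow> real) \<Rightarrow> ('a gword set \<Rightarrow> 'a gen \<Rightarrow> real \<Rightarrow> real) \<Rightarrow> bool" where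
  "edge_data V E \<longleftrightarrow> (\<forall>g\<in>Verts. \<forall>l\<in>Gens. E g l 0 = V g \<and> E g l 1 = V (gstep A R phi g l) \<and> continuous_on {0..1} (E g l))"

lemma graph_val_canon_edge: "edge_data V E \<Longrightarrow> g \<in> Verts \<Longrightarrow> l \<in> Gens \<Longrightarrow> 0 \<le> s \<Longrightarrow> s \<le> 1 \<Longrightarrow> graph_val V E (canon_edge A R phi g l s) = E g l s"
  by (auto simp: edge_data_def canon_edge_def graph_val_def)

lemma graph_val_letter_pt: "edge_data V E \<Longrightarrow> g \<in> Verts \<Longrightarrow> fst c \<in> Gens \<Longrightarrow> 0 \<le> s \<Longrightarrow> s \<le> 1 \<Longrightarrow>
   graph_val V E (letter_pt g c s) = (if snd c then E (act g [c]) (fst c) (1 - s) else E g (fst c) s)"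
  by (auto simp: letter_pt_def graph_val_canon_edge act_in_Verts)

lemma cellword_closed: "g \<in> Verts \<Longrightarrow> c \<in> cells A R \<Longrightarrow> over Gens (cellword phi c) \<and> act g (cellword phi c) = g"
proof -
  assume g: "g \<in> Verts" and c: "c \<in> cells A R"
  show ?thesis
  proof (cases c)
    case (RelCell r)
    then have r: "r \<in> R" using c by (auto simp: cells_def)
    have "liftw r \<in> Rels" using r by (simp add: relators_def)
    then show ?thesis using RelCell r R_over g by (simp add: cellword_def over_liftw act_relator)
  next
    case (ConjCell b)
    then have b: "b \<in> A" using c by (auto simp: cells_def)
    then show ?thesis using ConjCell phi_over g by (simp add: cellword_def conjrel_over act_relator conjrel_in_Rels)
  qed
qed

lemma continuous_on_graph_val_bdry_arc:
  assumes ok: "edge_data V E" and g: "g \<in> Verts" and w: "over Gens w" and gw: "act g w = g"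
    and k: "k < length w"
  shows "continuous_on {real k / real (length w) .. (real k + 1) / real (length w)}
    (\<lambda>t. graph_val V E (bdry A R phi g w (cis (2 * pi * t))))"
proof -
  let ?n = "length w"
  have n: "?n > 0" using k by (cases w) auto
  let ?u = "act g (take k w)"
  let ?l = "fst (w ! k)"
  have u: "?u \<in> Verts" using g w by (simp add: act_in_Verts over_take)
  have l: "?l \<in> Gens" using w k by (rule over_nth)
  have uc: "act ?u [w ! k] \<in> Verts" using u l by (simp add: act_in_Verts)
  have aff: "\<And>t. t \<in> {real k / real ?n .. (real k + 1) / real ?n} \<Longrightarrow> t * real ?n - real k \<in> {0..1}"
    using n by (auto simp: field_simps)
  define \<sigma> where "\<sigma> t = (if snd (w ! k) then E (act ?u [w ! k]) ?l (1 - (t * real ?n - real k)) else E ?u ?l (t * real ?n - real k))" for t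
  have eq: "graph_val V E (bdry A R phi g w (cis (2 * pi * t))) = \<sigma> t" if t: "t \<in> {real k / real ?n .. (real k + 1) / real ?n}" for t
  proof -
    have s: "0 \<le> t * real ?n - real k" "t * real ?n - real k \<le> 1" using aff[OF t] by auto
    have "(real k + (t * real ?n - real k)) / real ?n = t" using n by simp
    then have "graph_val V E (bdry A R phi g w (cis (2 * pi * t)))
        = graph_val V E (bdry A R phi g w (cis (2 * pi * ((real k + (t * real ?n - real k)) / real ?n))))"
      by simp
    also have "\<dots> = graph_val V E (letter_pt ?u (w ! k) (t * real ?n - real k))"
      using bdry_arc_closed[OF g w gw k s] by simp
    also have "\<dots> = \<sigma> t" using graph_val_letter_pt[OF ok u l s] by (simp add: \<sigma>_def)
    finally show ?thesis .
  qed
  have "continuous_on {real k / real ?n .. (real k + 1) / real ?n} \<sigma>"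
  proof (cases "snd (w ! k)")
    case True
    have cE: "continuous_on {0..1} (E (act ?u [w ! k]) ?l)" using ok uc l by (simp add: edge_data_def)
    have "continuous_on {real k / real ?n .. (real k + 1) / real ?n} (\<lambda>t. E (act ?u [w ! k]) ?l (1 - (t * real ?n - real k)))"
      by (rule continuous_on_compose2[OF cE]) (use aff in \<open>auto intro!: continuous_intros\<close>)
    then show ?thesis using True by (simp add: \<sigma>_def)
  next
    case False
    have cE: "continuous_on {0..1} (E ?u ?l)" using ok u l by (simp add: edge_data_def)
    have "continuous_on {real k / real ?n .. (real k + 1) / real ?n} (\<lambda>t. E ?u ?l (t * real ?n - real k))"
      by (rule continuous_on_compose2[OF cE]) (use aff in \<open>auto intro!: continuous_intros\<close>)
    then show ?thesis using False by (simp add: \<sigma>_def)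
  qed
  then show ?thesis by (rule continuous_on_eq) (simp add: eq)
qed

lemma continuous_on_graph_val_bdry:
  assumes ok: "edge_data V E" and g: "g \<in> Verts" and w: "over Gens w" and gw: "act g w = g"
  shows "continuous_on (sphere 0 1) (\<lambda>z. graph_val V E (bdry A R phi g w z))"
proof (cases "w = []")
  case True then show ?thesis by (simp add: bdry_def)
next
  case False
  define \<psi> where "\<psi> t = graph_val V E (bdry A R phi g w (cis (2 * pi * t)))" for t
  have "{0..1::real} = (\<Union>k<length w. {real k / real (length w) .. (real k + 1) / real (length w)})"
    using False by (intro atLeastAtMost_01_eq_UN_segments) simp
  then have "continuous_on {0..1} \<psi>"
    unfolding \<psi>_def by (auto intro!: continuous_on_closed_Union continuous_on_graph_val_bdry_arc[OF ok g w gw])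
  moreover have "\<psi> (t + 1) = \<psi> t" for t
    by (simp add: \<psi>_def distrib_left cis_add_2pi)
  ultimately have "continuous_on {-1..2} \<psi>" by (rule continuous_on_periodic_extend)
  then show ?thesis using continuous_on_sphere_from_angle[of "\<lambda>z. graph_val V E (bdry A R phi g w z)"]
    by (simp add: \<psi>_def)
qed

definition cell_ext :: "('a gword set \<Rightarrow> real) \<Rightarrow> ('a gword set \<Rightarrow> 'a gen \<Rightarrow> real \<Rightarrow> real) \<Rightarrow>
    ('a gword set \<Rightarrow> 'a cell \<Rightarrow> complex \<Rightarrow> real) \<Rightarrow> 'a xpt \<Rightarrow> real" where
  "cell_ext V E B q = (case q of Vert g \<Rightarrow> V g | Edge g l s \<Rightarrow> E g l s
     | Cell g c z \<Rightarrow> cmod z * graph_val V E (bdry A R phi g (cellword phi c) (z / of_real (cmod z))) + B g c z)"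

definition cell_data :: "('a gword set \<Rightarrow> 'a cell \<Rightarrow> complex \<Rightarrow> real) \<Rightarrow> bool" where
  "cell_data B \<longleftrightarrow> (\<forall>g\<in>Verts. \<forall>c\<in>cells A R. continuous_on (cball 0 1) (B g c) \<and> (\<forall>z. cmod z = 1 \<longrightarrow> B g c z = 0))"

lemma bdry_not_cell: "bdry A R phi g w z \<noteq> Cell h c z'"
  by (auto simp: bdry_def canon_edge_def Let_def)

lemma canon_edge_not_cell: "canon_edge A R phi g l s \<noteq> Cell h c z'"
  by (auto simp: canon_edge_def)

lemma cell_ext_noncell: "(\<And>h c z. q \<noteq> Cell h c z) \<Longrightarrow> cell_ext V E B q = graph_val V E q"
  by (cases q) (auto simp: cell_ext_def graph_val_def)

lemma cell_ext_canon: "edge_data V E \<Longrightarrow> cell_data B \<Longrightarrow> p \<in> Pcar \<Longrightarrow> cell_ext V E B (cn p) = cell_ext V E B p"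
proof -
  assume ok: "edge_data V E" and cb: "cell_data B" and p: "p \<in> Pcar"
  show ?thesis
  proof (cases p)
    case (Vert g) then show ?thesis by (simp add: canon_def)
  next
    case (Edge g l s)
    then have gls: "g \<in> Verts" "l \<in> Gens" "0 \<le> s" "s \<le> 1" using p by (auto simp: pre_carrier_def)
    have "cell_ext V E B (cn p) = graph_val V E (canon_edge A R phi g l s)"
      using Edge by (simp add: canon_def cell_ext_noncell canon_edge_not_cell)
    also have "\<dots> = E g l s" using graph_val_canon_edge[OF ok gls] .
    finally show ?thesis using Edge by (simp add: cell_ext_def)
  next
    case (Cell g c z)
    then have gcz: "g \<in> Verts" "c \<in> cells A R" "cmod z \<le> 1" using p by (auto simp: pre_carrier_def)
    show ?thesis
    proof (cases "cmod z = 1")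
      case True
      have "B g c z = 0" using cb gcz True by (simp add: cell_data_def)
      then show ?thesis using Cell True by (simp add: canon_def cell_ext_noncell bdry_not_cell) (simp add: cell_ext_def)
    next
      case False then show ?thesis using Cell by (simp add: canon_def)
    qed
  qed
qed

lemma continuous_map_cell_ext: "edge_data V E \<Longrightarrow> cell_data B \<Longrightarrow> continuous_map Cay euclideanreal (cell_ext V E B)"
proof -
  assume ok: "edge_data V E" and cb: "cell_data B"
  have "continuous_map Ptop euclideanreal (cell_ext V E B)"
  proof (rule continuous_map_from_pre)
    fix g l assume "g \<in> Verts" "l \<in> Gens"
    then have "continuous_on {0..1} (E g l)" using ok by (simp add: edge_data_def)
    then show "continuous_map (top_of_set {0..1}) euclideanreal (\<lambda>s. cell_ext V E B (Edge g l s))"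
      by (simp add: cell_ext_def)
  next
    fix g c assume g: "g \<in> Verts" and c: "c \<in> cells A R"
    have w: "over Gens (cellword phi c)" "act g (cellword phi c) = g" using cellword_closed[OF g c] by auto
    have c2: "continuous_on (cball 0 1) (B g c)" using cb g c by (simp add: cell_data_def)
    have "continuous_on (cball 0 1) (\<lambda>z. cmod z * graph_val V E (bdry A R phi g (cellword phi c) (z / of_real (cmod z))) + B g c z)"
      using continuous_on_add[OF continuous_on_radial_extend[OF continuous_on_graph_val_bdry[OF ok g w]] c2] .
    then show "continuous_map (top_of_set (cball 0 1)) euclideanreal (\<lambda>z. cell_ext V E B (Cell g c z))"
      by (simp add: cell_ext_def)
  qed simp
  then have "continuous_map Ptop euclideanreal (\<lambda>p. cell_ext V E B (cn p))"
    by (rule continuous_map_eq) (simp add: topspace_pre cell_ext_canon[OF ok cb])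
  then show ?thesis by (rule continuous_map_from_Cay)
qed

definition "canonical_pt q \<longleftrightarrow> (\<exists>g\<in>Verts. q = Vert g) \<or> (\<exists>g\<in>Verts. \<exists>l\<in>Gens. \<exists>s. 0 < s \<and> s < 1 \<and> q = Edge g l s)
   \<or> (\<exists>g\<in>Verts. \<exists>c\<in>cells A R. \<exists>z. cmod z < 1 \<and> q = Cell g c z)"

lemma canonical_pt_canon_edge: "g \<in> Verts \<Longrightarrow> l \<in> Gens \<Longrightarrow> 0 \<le> s \<Longrightarrow> s \<le> 1 \<Longrightarrow> canonical_pt (canon_edge A R phi g l s)"
  by (auto simp: canon_edge_def canonical_pt_def gstep_act act_in_Verts)

lemma canonical_pt_letter_pt: "g \<in> Verts \<Longrightarrow> fst c \<in> Gens \<Longrightarrow> 0 \<le> s \<Longrightarrow> s \<le> 1 \<Longrightarrow> canonical_pt (letter_pt g c s)"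
  by (auto simp: letter_pt_def intro!: canonical_pt_canon_edge act_in_Verts)

lemma canonical_pt_bdry: "g \<in> Verts \<Longrightarrow> over Gens w \<Longrightarrow> cmod z = 1 \<Longrightarrow> canonical_pt (bdry A R phi g w z)"
proof -
  assume g: "g \<in> Verts" and w: "over Gens w" and z: "cmod z = 1"
  show ?thesis
  proof (cases "w = []")
    case True then show ?thesis using g by (simp add: bdry_def canonical_pt_def)
  next
    case False
    have "length w > 0" using False by simp
    then obtain k s where ks: "k < length w" "0 \<le> s" "s < 1" "z = cis (2 * pi * ((real k + s) / real (length w)))"
      using sphere_cis_arc[OF z] by blast
    have "bdry A R phi g w z = letter_pt (act g (take k w)) (w ! k) s" using bdry_arc[OF g w ks(1-3)] ks(4) by simp
    moreover have "canonical_pt (letter_pt (act g (take k w)) (w ! k) s)"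
      using g w ks by (intro canonical_pt_letter_pt) (auto simp: act_in_Verts over_take over_nth)
    ultimately show ?thesis by simp
  qed
qed

lemma canonical_pt_Cay: "q \<in> topspace Cay \<Longrightarrow> canonical_pt q"
proof -
  assume "q \<in> topspace Cay"
  then obtain p where p: "p \<in> Pcar" "q = cn p" by (auto simp: topspace_Cay)
  show ?thesis
  proof (cases p)
    case (Vert g) then show ?thesis using p by (auto simp: canon_def canonical_pt_def pre_carrier_def)
  next
    case (Edge g l s) then show ?thesis using p by (auto simp: canon_def pre_carrier_def intro!: canonical_pt_canon_edge)
  next
    case (Cell g c z)
    then have gcz: "g \<in> Verts" "c \<in> cells A R" "cmod z \<le> 1" using p by (auto simp: pre_carrier_def)
    show ?thesis
    proof (cases "cmod z = 1")
      case True then show ?thesis using p Cell gcz cellword_closed[OF gcz(1,2)] by (simp add: canon_def canonical_pt_bdry)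
    next
      case False then show ?thesis using p Cell gcz by (auto simp: canon_def canonical_pt_def)
    qed
  qed
qed

definition "hat_V h0 g = (if g = h0 then 1 else (0::real))"

definition "hat_E h0 g l s = (if g = h0 then 1 - s else 0) + (if gstep A R phi g l = h0 then s else (0::real))"

definition "bump_E g0 l0 (i::nat) g l s = (if g = g0 \<and> l = l0 then s * (1 - s) * s ^ i else (0::real))"

definition "bump_B h0 c0 (k::nat) g c z = (if g = h0 \<and> c = c0 then (1 - cmod z) * (if k = 0 then 1 else if k = 1 then Re z else Im z) else (0::real))"

lemma edge_data_hat: "edge_data (hat_V h0) (hat_E h0)"
  unfolding edge_data_def hat_V_def hat_E_def
  by (intro ballI conjI continuous_on_add continuous_on_if_const continuous_intros) simp_all

lemma edge_data_bump: "edge_data (\<lambda>_. 0) (bump_E g0 l0 i)"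
  unfolding edge_data_def bump_E_def
  by (intro ballI conjI continuous_on_if_const continuous_intros) simp_all

lemma edge_data_zero: "edge_data (\<lambda>_. 0) (\<lambda>_ _ _. 0)"
  unfolding edge_data_def by auto

lemma cell_data_zero: "cell_data (\<lambda>_ _ _. 0)"
  unfolding cell_data_def by auto

lemma cell_data_bump: "cell_data (bump_B h0 c0 k)"
  unfolding cell_data_def bump_B_def
  by (intro ballI conjI allI impI continuous_on_if_const continuous_intros) simp_all

definition "fun_separated q1 q2 \<longleftrightarrow> (\<exists>f. continuous_map Cay euclideanreal f \<and> f q1 \<noteq> f q2)"

lemma fun_separated_sym: "fun_separated q1 q2 \<Longrightarrow> fun_separated q2 q1"
  unfolding fun_separated_def by metis

lemma fun_separatedI: "continuous_map Cay euclideanreal f \<Longrightarrow> f q1 \<noteq> f q2 \<Longrightarrow> fun_separated q1 q2"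
  unfolding fun_separated_def by blast

lemma graph_val_zero: "graph_val (\<lambda>_. 0) (\<lambda>_ _ _. 0) q = 0"
  by (cases q) (auto simp: graph_val_def)

lemma cell_ext_bump: "cell_ext (\<lambda>_. 0) (\<lambda>_ _ _. 0) (bump_B h0 c0 k) q = (case q of Cell g c z \<Rightarrow> bump_B h0 c0 k g c z | _ \<Rightarrow> 0)"
  by (cases q) (auto simp: cell_ext_def graph_val_zero)

lemma fun_separated_cell:
  assumes g: "g \<in> Verts" and c: "c \<in> cells A R" and z: "cmod z < 1" and ne: "q \<noteq> Cell g c z"
  shows "fun_separated (Cell g c z) q"
proof -
  have cb: "\<And>k. continuous_map Cay euclideanreal (cell_ext (\<lambda>_. 0) (\<lambda>_ _ _. 0) (bump_B g c k))"
    by (rule continuous_map_cell_ext[OF edge_data_zero cell_data_bump])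
  have pos: "1 - cmod z > 0" using z by simp
  show ?thesis
  proof (cases "\<exists>z'. q = Cell g c z'")
    case True
    then obtain z' where q: "q = Cell g c z'" by blast
    then have zz: "z \<noteq> z'" using ne by simp
    show ?thesis
    proof (cases "cmod z = cmod z'")
      case False
      then show ?thesis using q by (intro fun_separatedI[OF cb[of 0]]) (simp add: cell_ext_bump bump_B_def)
    next
      case nm: True
      show ?thesis
      proof (cases "Re z = Re z'")
        case False
        then show ?thesis using q nm pos by (intro fun_separatedI[OF cb[of 1]]) (simp add: cell_ext_bump bump_B_def)
      next
        case True
        then have "Im z \<noteq> Im z'" using zz complex_eqI by blast
        then show ?thesis using q nm pos by (intro fun_separatedI[OF cb[of 2]]) (simp add: cell_ext_bump bump_B_def)
      qed
    qed
  next
    case False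
    have "cell_ext (\<lambda>_. 0) (\<lambda>_ _ _. 0) (bump_B g c 0) q = 0" using False
      by (cases q) (auto simp: cell_ext_bump bump_B_def)
    then show ?thesis using pos by (intro fun_separatedI[OF cb[of 0]]) (simp add: cell_ext_bump bump_B_def)
  qed
qed

lemma fun_separated_Vert_Vert: "g1 \<noteq> g2 \<Longrightarrow> fun_separated (Vert g1) (Vert g2)"
  by (rule fun_separatedI[OF continuous_map_cell_ext[OF edge_data_hat cell_data_zero, of g1]]) (simp add: cell_ext_def hat_V_def)

lemma fun_separated_Vert_Edge:
  assumes "0 < s" "s < 1"
  shows "fun_separated (Vert g1) (Edge g l s)"
proof (cases "cell_ext (hat_V g1) (hat_E g1) (\<lambda>_ _ _. 0) (Vert g1) = cell_ext (hat_V g1) (hat_E g1) (\<lambda>_ _ _. 0) (Edge g l s)")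
  case False then show ?thesis by (rule fun_separatedI[OF continuous_map_cell_ext[OF edge_data_hat cell_data_zero]])
next
  case True
  have "s * (1 - s) * s ^ 0 > 0" using assms by simp
  then show ?thesis using assms by (intro fun_separatedI[OF continuous_map_cell_ext[OF edge_data_bump cell_data_zero, of g l 0]]) (simp add: cell_ext_def bump_E_def)
qed

lemma fun_separated_Edge_Edge:
  assumes "0 < s" "s < 1" "0 < s'" "s' < 1" "Edge g l s \<noteq> Edge g' l' s'"
  shows "fun_separated (Edge g l s) (Edge g' l' s')"
proof (cases "g = g' \<and> l = l'")
  case False
  have "s * (1 - s) * s ^ 0 > 0" using assms by simp
  then show ?thesis using False by (intro fun_separatedI[OF continuous_map_cell_ext[OF edge_data_bump cell_data_zero, of g l 0]]) (auto simp: cell_ext_def bump_E_def)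
next
  case True
  then have ss: "s \<noteq> s'" using assms by auto
  show ?thesis
  proof (cases "s * (1 - s) = s' * (1 - s')")
    case False
    then show ?thesis using True by (intro fun_separatedI[OF continuous_map_cell_ext[OF edge_data_bump cell_data_zero, of g l 0]]) (auto simp: cell_ext_def bump_E_def)
  next
    case eq: True
    have "s * (1 - s) > 0" using assms by simp
    then have "s * (1 - s) * s \<noteq> s' * (1 - s') * s'" using eq ss by (metis mult_left_cancel less_irrefl)
    then show ?thesis using True assms by (intro fun_separatedI[OF continuous_map_cell_ext[OF edge_data_bump cell_data_zero, of g l 1]]) (auto simp: cell_ext_def bump_E_def)
  qed
qed

lemma canonical_ptE:
  assumes "canonical_pt q"
  obtains (V) g where "q = Vert g"
    | (E) g l s where "q = Edge g l s" "0 < s" "s < 1"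
    | (C) g c z where "g \<in> Verts" "c \<in> cells A R" "cmod z < 1" "q = Cell g c z"
  using assms unfolding canonical_pt_def by blast

lemma fun_separated_canonical: "canonical_pt q1 \<Longrightarrow> canonical_pt q2 \<Longrightarrow> q1 \<noteq> q2 \<Longrightarrow> fun_separated q1 q2"
proof -
  assume c1: "canonical_pt q1" and c2: "canonical_pt q2" and ne: "q1 \<noteq> q2"
  show ?thesis using c1
  proof (cases rule: canonical_ptE)
    case (C g c z) then show ?thesis using ne by (simp add: fun_separated_cell)
  next
    case V1: (V g1)
    show ?thesis using c2
    proof (cases rule: canonical_ptE)
      case (V g2) then show ?thesis using V1 ne by (simp add: fun_separated_Vert_Vert)
    next
      case (E g l s) then show ?thesis using V1 by (simp add: fun_separated_Vert_Edge)
    next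
      case (C g c z) then show ?thesis using ne by (metis fun_separated_cell fun_separated_sym)
    qed
  next
    case E1: (E g l s)
    show ?thesis using c2
    proof (cases rule: canonical_ptE)
      case (V g2) then show ?thesis using E1 by (simp add: fun_separated_Vert_Edge fun_separated_sym)
    next
      case (E g' l' s') then show ?thesis using E1 ne by (simp add: fun_separated_Edge_Edge)
    next
      case (C g c z) then show ?thesis using ne by (metis fun_separated_cell fun_separated_sym)
    qed
  qed
qed

lemma Hausdorff_Cay: "Hausdorff_space Cay"
proof (rule Hausdorff_space_if_real_separated)
  fix x y assume "x \<in> topspace Cay" "y \<in> topspace Cay" "x \<noteq> y"
  then have "fun_separated x y" using canonical_pt_Cay fun_separated_canonical by blast
  then show "\<exists>f. continuous_map Cay euclideanreal f \<and> f x \<noteq> f y" by (simp add: fun_separated_def)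
qed

end

locale cayley_level_map = cayley_complex +
  fixes P :: "'a xpt \<Rightarrow> real"
  assumes level_map: "is_level_map A R phi P"
begin

lemma P_continuous: "continuous_map Cay euclideanreal P" using level_map by (simp add: is_level_map_def)

lemma P_vert: "g \<in> Verts \<Longrightarrow> P (Vert g) = lev g" using level_map by (simp add: is_level_map_def)

lemma P_canon_edge_L: "g \<in> Verts \<Longrightarrow> b \<in> A \<Longrightarrow> 0 \<le> s \<Longrightarrow> s \<le> 1 \<Longrightarrow> P (canon_edge A R phi g (L b) s) = lev g"
proof -
  assume g: "g \<in> Verts" and b: "b \<in> A" and s: "0 \<le> s" "s \<le> 1"
  consider "s = 0" | "s = 1" | "0 < s \<and> s < 1" using s by linarith
  then show ?thesis
  proof cases
    case 1 then show ?thesis using g by (simp add: canon_edge_def P_vert)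
  next
    case 2 then show ?thesis using g b by (simp add: canon_edge_def P_vert gstep_act act_in_Verts lev_act)
  next
    case 3 then show ?thesis using g b level_map by (auto simp: canon_edge_def is_level_map_def)
  qed
qed

lemma P_canon_edge_T: "g \<in> Verts \<Longrightarrow> 0 \<le> s \<Longrightarrow> s \<le> 1 \<Longrightarrow> P (canon_edge A R phi g T s) = lev g + s"
proof -
  assume g: "g \<in> Verts" and s: "0 \<le> s" "s \<le> 1"
  consider "s = 0" | "s = 1" | "0 < s \<and> s < 1" using s by linarith
  then show ?thesis
  proof cases
    case 1 then show ?thesis using g by (simp add: canon_edge_def P_vert)
  next
    case 2 then show ?thesis using g by (simp add: canon_edge_def P_vert gstep_act act_in_Verts lev_act)
  next
    case 3 then show ?thesis using g level_map by (auto simp: canon_edge_def is_level_map_def)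
  qed
qed

lemma P_letter_pt: "g \<in> Verts \<Longrightarrow> A_letter A c \<Longrightarrow> 0 \<le> s \<Longrightarrow> s \<le> 1 \<Longrightarrow> P (letter_pt g c s) = lev g"
proof -
  assume g: "g \<in> Verts" and c: "A_letter A c" and s: "0 \<le> s" "s \<le> 1"
  obtain b e where be: "c = (L b, e)" "b \<in> A" using c by (rule A_letterE)
  show ?thesis
  proof (cases e)
    case False then show ?thesis using be g s by (simp add: letter_pt_def P_canon_edge_L)
  next
    case True
    have h: "act g [c] \<in> Verts" "lev (act g [c]) = lev g" using g be by (simp_all add: act_in_Verts lev_act)
    then show ?thesis using be True s by (simp add: letter_pt_def P_canon_edge_L)
  qed
qed

lemma tsum_A_letters: "(\<forall>x\<in>set W. A_letter A x) \<Longrightarrow> tsum W = 0"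
  by (induction W) (auto simp: A_letter_def)

lemma phi_letter_A_letters: "A_letter A c \<Longrightarrow> \<forall>x\<in>set (phi_letter c). A_letter A x"
  by (metis in_set_conv_nth A_letter_phi_letter_nth)

lemma lev_act_phi_letter_prefix:
  assumes "g \<in> Verts" "A_letter A c"
  shows "lev (act g (take j (phi_letter c))) = lev g"
proof -
  have "\<forall>x\<in>set (take j (phi_letter c)). A_letter A x"
    using phi_letter_A_letters[OF assms(2)] by (meson in_set_takeD)
  then show ?thesis using assms phi_letter_over_Gens by (simp add: lev_act over_take tsum_A_letters)
qed

lemma P_path_pt: "u \<in> Verts \<Longrightarrow> A_letter A c \<Longrightarrow> 0 \<le> x \<Longrightarrow> x \<le> 1 \<Longrightarrow> P (path_pt u (phi_letter c) x) = lev u"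
proof -
  assume u: "u \<in> Verts" and c: "A_letter A c" and x: "0 \<le> x" "x \<le> 1"
  let ?W = "phi_letter c"
  show ?thesis
  proof (cases "?W = []")
    case True then show ?thesis using u by (simp add: path_pt_def P_vert)
  next
    case False
    obtain j where j: "j < length ?W" "real j \<le> x * real (length ?W)" "x * real (length ?W) \<le> real j + 1"
      using seg_index_bounds[OF False x] by blast
    have Wo: "over Gens ?W" using c by (rule phi_letter_over_Gens)
    have uj: "act u (take j ?W) \<in> Verts" using u Wo by (simp add: act_in_Verts over_take)
    have lj: "lev (act u (take j ?W)) = lev u" using u c by (rule lev_act_phi_letter_prefix)
    have "P (path_pt u ?W x) = P (letter_pt (act u (take j ?W)) (?W ! j) (x * real (length ?W) - real j))"
      using path_pt_segment[OF u Wo j] by simp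
    also have "\<dots> = lev u" using P_letter_pt[OF uj A_letter_phi_letter_nth[OF c j(1)]] j lj by simp
    finally show ?thesis .
  qed
qed

lemma P_tray: "g \<in> Verts \<Longrightarrow> 0 \<le> y \<Longrightarrow> P (tray A R phi g y) = lev g + y"
proof -
  assume g: "g \<in> Verts" and y: "0 \<le> y"
  define k where "k = nat \<lfloor>y\<rfloor>"
  have kk: "real k = of_int \<lfloor>y\<rfloor>" using y by (simp add: k_def)
  have k: "real k \<le> y" "y < real k + 1" unfolding kk by linarith+
  have gk: "act g (replicate k (T, False)) \<in> Verts" using g by (intro act_in_Verts) (auto simp: over_def)
  have "tray A R phi g y = canon_edge A R phi (act g (replicate k (T, False))) T (y - real k)"
    using tray_segment[OF g k(1)] k by (simp add: canon_def)
  moreover have "lev (act g (replicate k (T, False))) = lev g + real k"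
    using g by (simp add: lev_act over_def)
  ultimately show ?thesis using P_canon_edge_T[OF gk] k by simp
qed

lemma P_letter_square: "g \<in> Verts \<Longrightarrow> A_letter A c \<Longrightarrow> p \<in> unit_sq \<Longrightarrow> lev g \<le> P (letter_square g c p) \<and> P (letter_square g c p) \<le> lev g + 1"
proof -
  assume g: "g \<in> Verts" and c: "A_letter A c" and p: "p \<in> unit_sq"
  obtain x y where xy: "p = (x, y)" by (cases p)
  have r: "0 \<le> x" "x \<le> 1" "0 \<le> y" "y \<le> 1" using p xy by auto
  have gc: "act g [c] \<in> Verts" "lev (act g [c]) = lev g" using g c A_letter_Gens[OF c]
    by (auto simp: act_in_Verts lev_act A_letter_def)
  have u: "act g [(T, False)] \<in> Verts" "lev (act g [(T, False)]) = lev g + 1" using g by (simp_all add: act_in_Verts lev_act)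
  consider "y = 0" | "x = 0" | "x = 1" | "y = 1" | "0 < x \<and> x < 1 \<and> 0 < y \<and> y < 1" using r by linarith
  then show ?thesis
  proof cases
    case 1 then show ?thesis using xy r g c by (simp add: letter_square_bottom P_letter_pt)
  next
    case 2 then show ?thesis using xy r g c by (simp add: letter_square_left P_canon_edge_T)
  next
    case 3 then show ?thesis using xy r g c gc by (simp add: letter_square_right P_canon_edge_T)
  next
    case 4 then show ?thesis using xy r g c u by (simp add: letter_square_top P_path_pt)
  next
    case 5
    obtain h b z where hbz: "h \<in> Verts" "lev h = lev g" "b \<in> A" "cmod z < 1" "letter_square g c (x, y) = Cell h (ConjCell b) z"
      using letter_square_interior[OF g c] 5 by blast
    then show ?thesis using level_map xy by (auto simp: is_level_map_def)
  qed
qed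

lemma P_strip: "g \<in> Verts \<Longrightarrow> A_letter A c \<Longrightarrow> k \<le> n \<Longrightarrow> real k \<le> y \<Longrightarrow> y \<le> real k + 1 \<Longrightarrow> 0 \<le> x \<Longrightarrow> x \<le> 1 \<Longrightarrow>
  lev g + real k \<le> P (strip n g c x y) \<and> P (strip n g c x y) \<le> lev g + real k + 1"
proof (induction n arbitrary: g c k x y)
  case 0 then show ?case using P_letter_square[of g c "(x, y)"] by auto
next
  case (Suc n)
  note g = Suc.prems(1) and c = Suc.prems(2)
  let ?u = "act g [(T, False)]"
  let ?W = "phi_letter c"
  have u: "?u \<in> Verts" "lev ?u = lev g + 1" using g by (simp_all add: act_in_Verts lev_act)
  show ?case
  proof (cases "y \<le> 1")
    case True
    show ?thesis
    proof (cases "k = 0")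
      case True then show ?thesis using Suc.prems \<open>y \<le> 1\<close> P_letter_square[OF g c, of "(x, y)"] by auto
    next
      case False
      then have "k = 1" "y = 1" using Suc.prems \<open>y \<le> 1\<close> by auto
      then show ?thesis using Suc.prems u by (simp add: letter_square_top P_path_pt)
    qed
  next
    case False
    then have k1: "k \<ge> 1" using Suc.prems by (cases k) auto
    show ?thesis
    proof (cases "?W = []")
      case True
      then have "P (strip (Suc n) g c x y) = lev g + y" using False u by (simp add: P_tray)
      then show ?thesis using Suc.prems by simp
    next
      case Wne: False
      let ?j = "seg_index ?W x"
      have jp: "?j < length ?W" "real ?j \<le> x * real (length ?W)" "x * real (length ?W) \<le> real ?j + 1"
        using seg_index_bounds[OF Wne] Suc.prems by auto
      have cj: "A_letter A (?W ! ?j)" using c jp(1) by (rule A_letter_phi_letter_nth)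
      have gj: "act ?u (take ?j ?W) \<in> Verts" using act_prefix_in_Verts[OF g c] .
      have lj: "lev (act ?u (take ?j ?W)) = lev g + 1" using lev_act_phi_letter_prefix[OF u(1) c] u(2) by simp
      let ?s = "strip n (act ?u (take ?j ?W)) (?W ! ?j) (x * real (length ?W) - real ?j) (y - 1)"
      have e: "strip (Suc n) g c x y = ?s" using False Wne by simp
      have "lev (act ?u (take ?j ?W)) + real (k - 1) \<le> P ?s \<and> P ?s \<le> lev (act ?u (take ?j ?W)) + real (k - 1) + 1"
        using Suc.prems k1 jp by (intro Suc.IH[OF gj cj]) (auto simp: of_nat_diff)
      then show ?thesis unfolding e lj using k1 by (simp add: of_nat_diff)
    qed
  qed
qed

lemma P_homotopy:
  assumes "g \<in> Verts" "A_letter A c" "p \<in> {0..1} \<times> {real n .. real n + 1}"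
  shows "lev g + real n \<le> P (homotopy g c p) \<and> P (homotopy g c p) \<le> lev g + real n + 1"
  using assms P_strip[of g c n n "snd p" "fst p"] homotopy_strip[of p n g c] by auto

lemma proper_homotopy:
  assumes g: "g \<in> Verts" and c: "A_letter A c"
  shows "proper_cmap (top_of_set ({0..1} \<times> {0..})) Cay (homotopy g c)"
proof (rule proper_cmap_if_sublevels_bounded[OF continuous_map_homotopy[OF g c] Hausdorff_Cay P_continuous])
  show "closed ({0..1::real} \<times> {0::real..})" by (intro closed_Times) auto
  fix B
  have "{p \<in> {0..1} \<times> {0..}. P (homotopy g c p) \<le> B} \<subseteq> cbox (0, 0) (1, max 0 (B - lev g + 1))"
  proof
    fix p assume p: "p \<in> {p \<in> {0..1} \<times> {0..}. P (homotopy g c p) \<le> B}"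
    define n where "n = nat \<lfloor>snd p\<rfloor>"
    have "real n \<le> snd p" "snd p \<le> real n + 1" using p by (auto simp: n_def)
    then show "p \<in> cbox (0, 0) (1, max 0 (B - lev g + 1))"
      using p P_homotopy[OF g c, of p n] by (auto simp: cbox_Pair_eq)
  qed
  then show "bounded {p \<in> {0..1} \<times> {0..}. P (homotopy g c p) \<le> B}"
    by (rule bounded_subset[OF bounded_cbox])
qed

end

theorem lemma3p1:
  fixes A :: "'a set" and R :: "'a fword set" and phi :: "'a \<Rightarrow> 'a fword"
    and P :: "'a xpt \<Rightarrow> real" and v :: "'a gword set" and a :: 'a
  assumes "finite A" and "finite R"
    and "\<forall>r\<in>R. over A r \<and> reduced r"
    and "\<forall>b\<in>A. over A (phi b) \<and> reduced (phi b)"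
    and "is_level_map A R phi P"
    and "v \<in> verts A R phi" and "a \<in> A"
  shows "\<exists>H. proper_cmap (top_of_set ({0..1} \<times> {0..})) (cayley2 A R phi) H
     \<and> (\<forall>x\<in>{0..1}. H (x, 0) = edgemap A R phi v a x)
     \<and> (\<forall>y\<ge>0. H (0, y) = tray A R phi v y
              \<and> H (1, y) = tray A R phi (gstep A R phi v (L a)) y)
     \<and> (\<forall>n::nat. P ` H ` ({0..1} \<times> {real n .. real n + 1})
                  \<subseteq> {P (Vert v) + real n .. P (Vert v) + real n + 1})"
proof -
  interpret cayley_level_map A R phi P
    using assms(3-5) by unfold_locales auto
  let ?c = "(L a, False)"
  have c: "A_letter A ?c" using assms(7) by (simp add: A_letter_def)
  show ?thesis
  proof (intro exI[of _ "homotopy v ?c"] conjI ballI allI impI)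
    show "proper_cmap (top_of_set ({0..1} \<times> {0..})) Cay (homotopy v ?c)"
      by (rule proper_homotopy[OF assms(6) c])
    show "homotopy v ?c (x, 0) = edgemap A R phi v a x" if "x \<in> {0..1}" for x
      using that homotopy_bottom[OF assms(6) c] by (simp add: letter_pt_def edgemap_def canon_def)
    show "homotopy v ?c (0, y) = tray A R phi v y"
      and "homotopy v ?c (1, y) = tray A R phi (gstep A R phi v (L a)) y" if "0 \<le> y" for y
      using that homotopy_left[OF assms(6) c] homotopy_right[OF assms(6) c] by (simp_all add: gstep_act)
    show "P ` homotopy v ?c ` ({0..1} \<times> {real n .. real n + 1})
        \<subseteq> {P (Vert v) + real n .. P (Vert v) + real n + 1}" for n
      using P_homotopy[OF assms(6) c] P_vert[OF assms(6)] by auto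
  qed
qed

end
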